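(* Let $U\subset\mathbb R^d$ be open and bounded and let $\phi^\lambda:\Sigma\to\mathbb R$, $\lambda\in\overline U$, be potentials satisfying (H1) and (H2). For $\lambda\in\overline U$ let $h_\lambda\in\Lambda$ and the probability measure $\nu_\lambda$ be the unique pair with $L_\lambda h_\lambda=e^{P(\phi^\lambda)}h_\lambda$, $L_\lambda^*\nu_\lambda=e^{P(\phi^\lambda)}\nu_\lambda$, $\int h_\lambda d\nu_\lambda=1$. Then for every $0<\theta'<\theta$ there exists $c_{\theta'}>0$ such that for all $\lambda,\lambda'\in U$: $$\frac{h_\lambda(\omega)}{h_{\lambda'}(\omega)}\le e^{c_{\theta'}|\lambda-\lambda'|^{\theta'}}\ \text{for all }\omega\in\Sigma,\qquad \frac{\nu_\lambda([\omega])}{\nu_{\lambda'}([\omega])}\le e^{c_{\theta'}|\lambda-\lambda'|^{\theta'}|\omega|}\ \text{for all finite words }\omega.$$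
   Context: $\mathcal A=\{1,\dots,m\}$, $\Sigma=\mathcal A^{\mathbb N}$ with left shift $\sigma$, $[\omega]$ cylinder, $|\omega|$ length, $|\omega\wedge\tau|$ length of longest common prefix, $i\omega$ the concatenation of symbol $i$ with $\omega$. (H1): there exist $0<\alpha<1$, $b>0$ with $\sup_{\lambda\in\overline U}\sup_{|\omega\wedge\tau|=k}|\phi^\lambda(\omega)-\phi^\lambda(\tau)|\le b\alpha^k$ for all $k$. (H2): there exist $c>0$, $0<\theta<1$ with $\sup_\omega|\phi^\lambda(\omega)-\phi^{\lambda'}(\omega)|\le c|\lambda-\lambda'|^\theta$ for all $\lambda,\lambda'\in\overline U$. Transfer (Perron) operator on continuous functions: $(L_\lambda h)(\omega)=\sum_{i\in\mathcal A}e^{\phi^\lambda(i\omega)}h(i\omega)$. $\Lambda=\{f:\Sigma\to\mathbb R_+: f(\omega)\le\exp(\sum_{k=|\omega\wedge\tau|+1}^\infty2b\alpha^k)f(\tau)\ \forall\omega,\tau\}$. Pressure $P(\phi)=\lim_n\frac1n\log\sum_{\omega\in\mathcal A^n}\exp(\sup_{\mathbf i\in[\omega]}\sum_{\ell<n}\phi(\sigma^\ell\mathbf i))$. *)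

theory Defs
  imports "HOL-Analysis.Analysis" "HOL-Probability.Probability"
begin

text \<open>Symbolic space over the alphabet {1..m}: one-sided sequences indexed from 0,
  carrying the product topology (library instance on function spaces, nat discrete).\<close>
definition Sigma_space :: "nat \<Rightarrow> (nat \<Rightarrow> nat) set" where
  "Sigma_space m = {x. \<forall>n. x n \<in> {1..m}}"

text \<open>Borel measurable structure on Sigma (product sigma algebra = Borel sigma algebra).\<close>
definition Sigma_M :: "nat \<Rightarrow> (nat \<Rightarrow> nat) measure" where
  "Sigma_M m = (\<Pi>\<^sub>M n\<in>UNIV. count_space {1..m})"

definition words :: "nat \<Rightarrow> nat list set" where
  "words m = {w. set w \<subseteq> {1..m}}"

definition cyl :: "nat \<Rightarrow> nat list \<Rightarrow> (nat \<Rightarrow> nat) set" where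
  "cyl m w = {x \<in> Sigma_space m. \<forall>i<length w. x i = w ! i}"

text \<open>Length of the longest common prefix (for distinct sequences).\<close>
definition cpl :: "(nat \<Rightarrow> nat) \<Rightarrow> (nat \<Rightarrow> nat) \<Rightarrow> nat" where
  "cpl x y = (LEAST k. x k \<noteq> y k)"

definition scons :: "nat \<Rightarrow> (nat \<Rightarrow> nat) \<Rightarrow> (nat \<Rightarrow> nat)" where
  "scons i x = (\<lambda>n. case n of 0 \<Rightarrow> i | Suc k \<Rightarrow> x k)"

definition shiftn :: "nat \<Rightarrow> (nat \<Rightarrow> nat) \<Rightarrow> (nat \<Rightarrow> nat)" where
  "shiftn l x = (\<lambda>n. x (n + l))"

definition transfer :: "nat \<Rightarrow> ((nat \<Rightarrow> nat) \<Rightarrow> real) \<Rightarrow> ((nat \<Rightarrow> nat) \<Rightarrow> real) \<Rightarrow> (nat \<Rightarrow> nat) \<Rightarrow> real" where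
  "transfer m phi h x = (\<Sum>i\<in>{1..m}. exp (phi (scons i x)) * h (scons i x))"

definition pressure :: "nat \<Rightarrow> ((nat \<Rightarrow> nat) \<Rightarrow> real) \<Rightarrow> real" where
  "pressure m phi = lim (\<lambda>n. ln (\<Sum>w\<in>{w\<in>words m. length w = n}.
       exp (SUP y\<in>cyl m w. (\<Sum>l<n. phi (shiftn l y)))) / real n)"

definition Lambda_cone :: "nat \<Rightarrow> real \<Rightarrow> real \<Rightarrow> ((nat \<Rightarrow> nat) \<Rightarrow> real) set" where
  "Lambda_cone m b \<alpha> = {f. (\<forall>x\<in>Sigma_space m. 0 \<le> f x) \<and>
     (\<forall>x\<in>Sigma_space m. \<forall>y\<in>Sigma_space m. x \<noteq> y \<longrightarrow>
        f x \<le> exp (\<Sum>j. 2 * b * \<alpha> ^ (cpl x y + 1 + j)) * f y)}"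

end

theory Submission
  imports Defs
begin

text \<open>
  The eigendata are recovered from any positive function \<open>F\<close> of the cone \<open>\<Lambda>\<close> by iteration:
  \<open>L\<^sup>N F / e\<^bsup>N P\<^esup> \<rightarrow> h \<integral> F d\<nu>\<close>. Ratios of cone functions on a common \<open>c\<close>-cylinder are
  at most \<open>e\<^bsup>K c\<^esup>\<close>, so the weights of a block of \<open>k\<close> iterations at any two points overlap
  by a fixed proportion \<open>\<epsilon>\<close>; this Doeblin argument contracts the oscillation of
  \<open>L\<^sup>N F / L\<^sup>N h\<close> geometrically in the number of blocks, up to an error \<open>O(\<alpha>\<^sup>k)\<close> per block.
  Comparing the operators of \<open>\<lambda>\<close> and \<open>\<lambda>'\<close> pointwise costs a factor \<open>e\<^sup>\<delta>\<close> per iteration,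
  \<open>\<delta> = c |\<lambda> - \<lambda>'|\<^sup>\<theta>\<close>. With \<open>N = k\<^sup>2\<close> iterations the total error is \<open>N \<delta> + \<beta>\<^sup>k\<close> for
  some \<open>\<beta> < 1\<close>, and \<open>k \<approx> log (1 / |\<lambda> - \<lambda>'|)\<close> makes it
  \<open>O(log\<^sup>2 (1 / |\<lambda> - \<lambda>'|) |\<lambda> - \<lambda>'|\<^sup>\<theta>) = O(|\<lambda> - \<lambda>'|\<^bsup>\<theta>'\<^esup>)\<close>. Cylinder measures are
  integrals of exponentials of Birkhoff sums, which lie in the cone.
\<close>

lemma space_Sigma_M: "space (Sigma_M m) = Sigma_space m"
  by (auto simp: Sigma_M_def Sigma_space_def space_PiM PiE_def Pi_def)

lemma measurable_Sigma_M_component: "(\<lambda>x. x i) \<in> measurable (Sigma_M m) (count_space {1..m})"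
  unfolding Sigma_M_def by (rule measurable_component_singleton) simp

lemma borel_measurable_Sigma_M_continuous:
  assumes "continuous_on (Sigma_space m) f"
  shows "f \<in> borel_measurable (Sigma_M m)"
proof -
  have "(\<lambda>x. x) \<in> measurable (Sigma_M m) (Pi\<^sub>M UNIV (\<lambda>i. borel :: nat measure))"
  proof (rule measurable_PiM_single')
    fix i :: nat
    have "(\<lambda>x::nat. x) \<in> measurable (count_space {1..m}) (borel :: nat measure)"
      by (simp add: measurable_count_space_eq1)
    with measurable_Sigma_M_component show "(\<lambda>x. x i) \<in> measurable (Sigma_M m) borel"
      by (rule measurable_compose)
  qed (auto simp: space_PiM)
  moreover have "measurable (Sigma_M m) (Pi\<^sub>M UNIV (\<lambda>i. borel :: nat measure))
      = measurable (Sigma_M m) (borel :: (nat \<Rightarrow> nat) measure)"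
    by (rule measurable_cong_sets[OF refl sets_PiM_equal_borel])
  ultimately have id: "(\<lambda>x. x) \<in> measurable (Sigma_M m) (borel :: (nat \<Rightarrow> nat) measure)"
    by simp
  have "(\<lambda>x. x) \<in> measurable (Sigma_M m) (restrict_space borel (Sigma_space m))"
    by (rule measurable_restrict_space2) (auto simp: space_Sigma_M id)
  moreover have "f \<in> borel_measurable (restrict_space borel (Sigma_space m))"
    by (rule borel_measurable_continuous_on_restrict[OF assms])
  ultimately show ?thesis by (rule measurable_compose)
qed

lemma open_prefix_agreement: "open {y::nat\<Rightarrow>nat. \<forall>n<N. y n = x n}"
proof -
  have "{y::nat\<Rightarrow>nat. \<forall>n<N. y n = x n} = (\<Inter>n\<in>{..<N}. (\<lambda>y. y n) -` {x n})" by auto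
  also have "open \<dots>"
    by (intro open_INT finite_lessThan ballI open_vimage)
      (auto intro: discrete_topology_class.open_discrete)
  finally show ?thesis .
qed

lemma continuous_on_Sigma_spaceI:
  fixes f :: "(nat \<Rightarrow> nat) \<Rightarrow> real"
  assumes "\<And>x e. x \<in> Sigma_space m \<Longrightarrow> 0 < e \<Longrightarrow>
             \<exists>N. \<forall>y\<in>Sigma_space m. (\<forall>n<N. y n = x n) \<longrightarrow> \<bar>f y - f x\<bar> < e"
  shows "continuous_on (Sigma_space m) f"
  unfolding continuous_on_topological
proof (intro ballI allI impI)
  fix x B assume x: "x \<in> Sigma_space m" and B: "open B" "f x \<in> B"
  then obtain e where e: "e > 0" "\<And>z. dist z (f x) < e \<Longrightarrow> z \<in> B"
    by (meson open_dist)
  from assms[OF x e(1)] obtain N where N: "\<forall>y\<in>Sigma_space m. (\<forall>n<N. y n = x n) \<longrightarrow> \<bar>f y - f x\<bar> < e"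
    by blast
  show "\<exists>A. open A \<and> x \<in> A \<and> (\<forall>y\<in>Sigma_space m. y \<in> A \<longrightarrow> f y \<in> B)"
    by (rule exI[of _ "{y. \<forall>n<N. y n = x n}"])
      (use N e open_prefix_agreement in \<open>auto simp: dist_real_def\<close>)
qed

definition wcons :: "nat list \<Rightarrow> (nat \<Rightarrow> nat) \<Rightarrow> (nat \<Rightarrow> nat)" where
  "wcons w x = (\<lambda>n. if n < length w then w ! n else x (n - length w))"

lemma wcons_Nil[simp]: "wcons [] x = x" by (simp add: wcons_def)

lemma scons_wcons: "scons i (wcons w x) = wcons (i # w) x"
  by (auto simp: scons_def wcons_def fun_eq_iff split: nat.splits)

lemma wcons_in_Sigma_space: "x \<in> Sigma_space m \<Longrightarrow> w \<in> words m \<Longrightarrow> wcons w x \<in> Sigma_space m"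
  by (auto simp: Sigma_space_def words_def wcons_def) (meson atLeastAtMost_iff nth_mem subsetD)+

lemma scons_in_Sigma_space: "x \<in> Sigma_space m \<Longrightarrow> i \<in> {1..m} \<Longrightarrow> scons i x \<in> Sigma_space m"
  by (auto simp: Sigma_space_def scons_def split: nat.splits)

lemma cpl_eqI:
  assumes "x k \<noteq> y k" "\<And>n. n < k \<Longrightarrow> x n = y n"
  shows "cpl x y = k"
  unfolding cpl_def by (rule Least_equality) (use assms in \<open>auto simp: not_less[symmetric]\<close>)

lemma cpl_differs: "x \<noteq> y \<Longrightarrow> x (cpl x y) \<noteq> y (cpl x y)"
  unfolding cpl_def by (rule LeastI_ex) auto

lemma cpl_agrees: "n < cpl x y \<Longrightarrow> x n = y n"
  unfolding cpl_def using not_less_Least by blast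

lemma cpl_ge_if_agree: "x \<noteq> y \<Longrightarrow> \<forall>n<N. x n = y n \<Longrightarrow> N \<le> cpl x y"
  using cpl_differs not_le by blast

lemma wcons_neq: "x \<noteq> y \<Longrightarrow> wcons w x \<noteq> wcons w y"
  by (metis (no_types) add_diff_cancel_right' wcons_def le_add2 not_less ext)

lemma cpl_wcons:
  assumes "x \<noteq> y"
  shows "cpl (wcons w x) (wcons w y) = length w + cpl x y"
proof (rule cpl_eqI)
  show "wcons w x (length w + cpl x y) \<noteq> wcons w y (length w + cpl x y)"
    using cpl_differs[OF assms] by (simp add: wcons_def)
  fix n assume "n < length w + cpl x y"
  then show "wcons w x n = wcons w y n"
    using cpl_agrees[of "n - length w" x y] by (auto simp: wcons_def)
qed

lemma continuous_on_scons: "continuous_on UNIV (scons i)"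
proof (rule continuous_on_coordinatewise_then_product)
  fix n show "continuous_on UNIV (\<lambda>x. scons i x n)"
    by (cases n) (auto simp: scons_def)
qed

lemma continuous_on_compose_scons:
  assumes "continuous_on (Sigma_space m) g" "i \<in> {1..m}"
  shows "continuous_on (Sigma_space m) (\<lambda>x. g (scons i x))"
  by (rule continuous_on_compose2[OF assms(1) continuous_on_subset[OF continuous_on_scons]])
     (use scons_in_Sigma_space assms(2) in auto)

lemma continuous_on_indicator_cyl: "continuous_on (Sigma_space m) (indicator (cyl m w) :: _ \<Rightarrow> real)"
proof (rule continuous_on_Sigma_spaceI, intro exI[of _ "length w"] ballI impI)
  fix x y and e :: real assume "x \<in> Sigma_space m" "0 < e" "y \<in> Sigma_space m" "\<forall>n<length w. y n = x n"
  then have "y \<in> cyl m w \<longleftrightarrow> x \<in> cyl m w" by (auto simp: cyl_def)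
  then show "\<bar>indicator (cyl m w) y - indicator (cyl m w) x\<bar> < e" using \<open>0 < e\<close>
    by (simp add: indicator_def)
qed

definition cone_exponent :: "real \<Rightarrow> real \<Rightarrow> nat \<Rightarrow> real" where
  "cone_exponent b \<alpha> c = 2 * b * \<alpha> ^ (c + 1) / (1 - \<alpha>)"

definition pos_cone :: "nat \<Rightarrow> real \<Rightarrow> real \<Rightarrow> ((nat \<Rightarrow> nat) \<Rightarrow> real) \<Rightarrow> bool" where
  "pos_cone m b \<alpha> f \<longleftrightarrow> (\<forall>x\<in>Sigma_space m. 0 < f x) \<and>
     (\<forall>x\<in>Sigma_space m. \<forall>y\<in>Sigma_space m. x \<noteq> y \<longrightarrow> f x \<le> exp (cone_exponent b \<alpha> (cpl x y)) * f y)"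

definition holder_potential :: "nat \<Rightarrow> real \<Rightarrow> real \<Rightarrow> ((nat \<Rightarrow> nat) \<Rightarrow> real) \<Rightarrow> bool" where
  "holder_potential m b \<alpha> phi \<longleftrightarrow>
     (\<forall>x\<in>Sigma_space m. \<forall>y\<in>Sigma_space m. x \<noteq> y \<longrightarrow> \<bar>phi x - phi y\<bar> \<le> b * \<alpha> ^ cpl x y)"

fun birkhoff_sum :: "((nat \<Rightarrow> nat) \<Rightarrow> real) \<Rightarrow> nat list \<Rightarrow> (nat \<Rightarrow> nat) \<Rightarrow> real" where
  "birkhoff_sum phi [] x = 0"
| "birkhoff_sum phi (i # w) x = phi (wcons (i # w) x) + birkhoff_sum phi w x"

definition words_len :: "nat \<Rightarrow> nat \<Rightarrow> nat list set" where
  "words_len m n = {w \<in> words m. length w = n}"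

definition transfer_iter ::
    "nat \<Rightarrow> ((nat \<Rightarrow> nat) \<Rightarrow> real) \<Rightarrow> nat \<Rightarrow> ((nat \<Rightarrow> nat) \<Rightarrow> real) \<Rightarrow> (nat \<Rightarrow> nat) \<Rightarrow> real" where
  "transfer_iter m phi n f = (transfer m phi ^^ n) f"

lemma finite_words_len: "finite (words_len m n)"
proof -
  have "words_len m n = {xs. set xs \<subseteq> {1..m} \<and> length xs = n}"
    by (auto simp: words_len_def words_def)
  then show ?thesis by (simp add: finite_lists_length_eq)
qed

lemma words_len_Suc: "words_len m (Suc n) = (\<lambda>(i, w). i # w) ` ({1..m} \<times> words_len m n)"
proof
  show "words_len m (Suc n) \<subseteq> (\<lambda>(i, w). i # w) ` ({1..m} \<times> words_len m n)"
  proof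
    fix v assume "v \<in> words_len m (Suc n)"
    then obtain i w where "v = i # w" "i \<in> {1..m}" "w \<in> words_len m n"
      by (cases v) (auto simp: words_len_def words_def)
    then show "v \<in> (\<lambda>(i, w). i # w) ` ({1..m} \<times> words_len m n)"
      by (intro image_eqI[where x="(i, w)"]) auto
  qed
next
  show "(\<lambda>(i, w). i # w) ` ({1..m} \<times> words_len m n) \<subseteq> words_len m (Suc n)"
  proof
    fix v assume "v \<in> (\<lambda>(i, w). i # w) ` ({1..m} \<times> words_len m n)"
    then obtain p where "p \<in> {1..m} \<times> words_len m n" "v = (\<lambda>(i, w). i # w) p" by blast
    then obtain i w where "v = i # w" "i \<in> {1..m}" "w \<in> words_len m n" by (cases p) auto
    then show "v \<in> words_len m (Suc n)" by (simp add: words_len_def words_def)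
  qed
qed

lemma transfer_iter_Suc: "transfer_iter m phi (Suc n) f = transfer_iter m phi n (transfer m phi f)"
  by (simp add: transfer_iter_def funpow_Suc_right del: funpow.simps)

lemma transfer_iter_Suc': "transfer_iter m phi (Suc n) f = transfer m phi (transfer_iter m phi n f)"
  by (simp add: transfer_iter_def)

lemma transfer_iter_0[simp]: "transfer_iter m phi 0 f = f" by (simp add: transfer_iter_def)

lemma transfer_iter_eq_sum:
  "transfer_iter m phi n f x = (\<Sum>w\<in>words_len m n. exp (birkhoff_sum phi w x) * f (wcons w x))"
proof (induction n arbitrary: f)
  case 0
  have "words_len m 0 = {[]}" by (auto simp: words_len_def words_def)
  then show ?case by simp
next
  case (Suc n)
  have "transfer_iter m phi (Suc n) f x
      = (\<Sum>w\<in>words_len m n. exp (birkhoff_sum phi w x) * transfer m phi f (wcons w x))"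
    by (simp add: transfer_iter_Suc Suc.IH)
  also have "\<dots> = (\<Sum>w\<in>words_len m n. \<Sum>i\<in>{1..m}. exp (birkhoff_sum phi (i # w) x) * f (wcons (i # w) x))"
    by (simp add: transfer_def sum_distrib_left scons_wcons exp_add mult_ac)
  also have "\<dots> = (\<Sum>(i, w)\<in>{1..m} \<times> words_len m n. exp (birkhoff_sum phi (i # w) x) * f (wcons (i # w) x))"
    by (subst sum.swap) (simp add: sum.cartesian_product)
  also have "\<dots> = (\<Sum>v\<in>words_len m (Suc n). exp (birkhoff_sum phi v x) * f (wcons v x))"
    unfolding words_len_Suc by (subst sum.reindex) (auto simp: inj_on_def case_prod_beta)
  finally show ?case .
qed

lemma transfer_iter_add: "transfer_iter m phi (a + c) f
    = transfer_iter m phi a (transfer_iter m phi c f)"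
  by (simp add: transfer_iter_def funpow_add)

lemma transfer_iter_cmult: "transfer_iter m p N (\<lambda>x. c * f x) x = c * transfer_iter m p N f x"
  unfolding transfer_iter_eq_sum by (simp add: sum_distrib_left mult_ac)

lemma birkhoff_sum_le_perturbed:
  assumes "\<forall>x\<in>Sigma_space m. p1 x \<le> p2 x + \<delta>" "x \<in> Sigma_space m" "w \<in> words m"
  shows "birkhoff_sum p1 w x \<le> birkhoff_sum p2 w x + real (length w) * \<delta>"
  using assms(3)
proof (induction w)
  case (Cons i w)
  have w: "w \<in> words m" using Cons.prems by (auto simp: words_def)
  have "p1 (wcons (i # w) x) \<le> p2 (wcons (i # w) x) + \<delta>"
    using assms(1) wcons_in_Sigma_space[OF assms(2) Cons.prems] by blast
  then show ?case using Cons.IH[OF w] by (simp add: algebra_simps)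
qed simp

lemma transfer_iter_le_perturbed:
  assumes "\<forall>x\<in>Sigma_space m. p1 x \<le> p2 x + \<delta>" "\<forall>x\<in>Sigma_space m. 0 \<le> f x" "x \<in> Sigma_space m"
  shows "transfer_iter m p1 N f x \<le> exp (real N * \<delta>) * transfer_iter m p2 N f x"
  unfolding transfer_iter_eq_sum sum_distrib_left
proof (rule sum_mono)
  fix w assume w: "w \<in> words_len m N"
  then have "birkhoff_sum p1 w x \<le> birkhoff_sum p2 w x + real N * \<delta>"
    using birkhoff_sum_le_perturbed[OF assms(1,3)] by (auto simp: words_len_def)
  moreover have "0 \<le> f (wcons w x)" using assms(2) wcons_in_Sigma_space[OF assms(3)] w
    by (auto simp: words_len_def)
  ultimately show "exp (birkhoff_sum p1 w x) * f (wcons w x)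
      \<le> exp (real N * \<delta>) * (exp (birkhoff_sum p2 w x) * f (wcons w x))"
    by (auto simp: exp_add[symmetric] mult_ac intro!: mult_left_mono)
qed

lemma transfer_iter_cong:
  assumes "\<forall>x\<in>Sigma_space m. f x = g x" "x \<in> Sigma_space m"
  shows "transfer_iter m p N f x = transfer_iter m p N g x"
  unfolding transfer_iter_eq_sum using assms wcons_in_Sigma_space
    by (intro sum.cong) (auto simp: words_len_def)

lemma transfer_iter_eigen:
  assumes "\<forall>x\<in>Sigma_space m. transfer m p h x = r * h x" "x \<in> Sigma_space m"
  shows "transfer_iter m p N h x = r ^ N * h x"
  using assms(2)
proof (induction N arbitrary: x)
  case (Suc N)
  have "transfer_iter m p (Suc N) h x = transfer_iter m p N (transfer m p h) x"
    by (simp add: transfer_iter_Suc)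
  also have "\<dots> = transfer_iter m p N (\<lambda>x. r * h x) x" using assms(1) Suc.prems
    by (rule transfer_iter_cong)
  also have "\<dots> = r ^ Suc N * h x" by (simp add: transfer_iter_cmult Suc.IH[OF Suc.prems])
  finally show ?case .
qed simp

text \<open>Split the normalised weights \<open>a\<close> into \<open>\<epsilon>\<close> times the normalised weights \<open>b\<close> plus a
  nonnegative rest; against the rest, \<open>H\<close> is at most \<open>Q\<close> times its \<open>b\<close>-average.\<close>
lemma weighted_average_contraction:
  fixes a b G H :: "'w \<Rightarrow> real"
  assumes W: "finite W" "W \<noteq> {}" and pa: "\<forall>w\<in>W. 0 < a w" and pb: "\<forall>w\<in>W. 0 < b w"
    and D: "\<forall>w\<in>W. \<epsilon> * (b w / sum b W) \<le> a w / sum a W"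
    and GH: "\<forall>w\<in>W. G w \<le> \<rho> * H w" and r: "0 \<le> \<rho>"
    and HQ: "\<forall>w\<in>W. \<forall>w'\<in>W. H w \<le> Q * H w'"
  shows "(\<Sum>w\<in>W. a w * G w) / sum a W \<le> \<rho> * ((1 - \<epsilon>) * Q + \<epsilon>) * ((\<Sum>w\<in>W. b w * H w) / sum b W)"
proof -
  define A where "A = sum a W"
  define B where "B = sum b W"
  have A: "0 < A" unfolding A_def using W pa by (intro sum_pos) auto
  have B: "0 < B" unfolding B_def using W pb by (intro sum_pos) auto
  define p where "p w = a w / A" for w
  define q where "q w = b w / B" for w
  have sp: "sum p W = 1" using A by (simp add: p_def A_def sum_divide_distrib[symmetric])
  have sq: "sum q W = 1" using B by (simp add: q_def B_def sum_divide_distrib[symmetric])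
  define M where "M = (\<Sum>w\<in>W. q w * H w)"
  have lhs: "(\<Sum>w\<in>W. a w * G w) / A = (\<Sum>w\<in>W. p w * G w)"
    by (simp add: p_def sum_divide_distrib)
  have rhs: "(\<Sum>w\<in>W. b w * H w) / B = M"
    by (simp add: q_def M_def sum_divide_distrib)
  have pq: "\<forall>w\<in>W. 0 \<le> p w - \<epsilon> * q w" using D by (simp add: p_def q_def A_def B_def)
  have HM: "H w \<le> Q * M" if "w \<in> W" for w
  proof -
    have "H w = (\<Sum>w'\<in>W. q w' * H w)" using sq by (simp add: sum_distrib_right[symmetric])
    also have "\<dots> \<le> (\<Sum>w'\<in>W. q w' * (Q * H w'))"
      using HQ that pb B by (intro sum_mono mult_left_mono) (auto simp: q_def)
    finally show ?thesis by (simp add: M_def sum_distrib_left mult_ac)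
  qed
  have "(\<Sum>w\<in>W. p w * G w) \<le> (\<Sum>w\<in>W. p w * (\<rho> * H w))"
    using GH pa A by (intro sum_mono mult_left_mono) (auto simp: p_def)
  also have "\<dots> = \<rho> * (\<Sum>w\<in>W. p w * H w)" by (simp add: sum_distrib_left mult_ac)
  also have "(\<Sum>w\<in>W. p w * H w) = (\<Sum>w\<in>W. (p w - \<epsilon> * q w) * H w) + \<epsilon> * M"
    by (simp add: M_def algebra_simps sum.distrib sum_subtractf sum_distrib_left)
  also have "(\<Sum>w\<in>W. (p w - \<epsilon> * q w) * H w) \<le> (\<Sum>w\<in>W. (p w - \<epsilon> * q w) * (Q * M))"
    using pq HM by (intro sum_mono mult_left_mono) auto
  also have "\<dots> = (1 - \<epsilon>) * Q * M"
    using sp sq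
      by (simp add: sum_distrib_right[symmetric] sum_subtractf sum_distrib_left[symmetric])
  finally have "(\<Sum>w\<in>W. p w * G w) \<le> \<rho> * ((1 - \<epsilon>) * Q * M + \<epsilon> * M)"
    using r by (simp add: mult_left_mono)
  then show ?thesis using lhs rhs by (simp add: A_def B_def algebra_simps)
qed

lemma normalized_weight_ge:
  fixes a b :: "'w \<Rightarrow> real"
  assumes W: "finite W" and b: "\<forall>w\<in>W. 0 < b w" and c: "0 < c"
    and ab: "\<forall>w\<in>W. a w \<le> c * b w" and ba: "\<forall>w\<in>W. b w \<le> c * a w" and w: "w \<in> W"
  shows "b w / sum b W / c\<^sup>2 \<le> a w / sum a W"
proof -
  have a: "0 < a v" if "v \<in> W" for v
    using b ba that c by (meson less_le_trans zero_less_mult_pos)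
  have sum_a: "0 < sum a W" and sum_b: "0 < sum b W" using W w a b by (auto intro!: sum_pos)
  have "sum a W \<le> c * sum b W" using ab by (simp add: sum_distrib_left sum_mono)
  have "b w / sum b W / c\<^sup>2 \<le> c * a w / sum b W / c\<^sup>2"
    using ba w sum_b c by (intro divide_right_mono) auto
  also have "\<dots> = a w / (c * sum b W)" using c by (simp add: power2_eq_square)
  also have "\<dots> \<le> a w / sum a W"
    using \<open>sum a W \<le> c * sum b W\<close> sum_a a[OF w] by (intro divide_left_mono) auto
  finally show ?thesis .
qed

lemma mixing_step:
  fixes e \<rho> E0 :: real
  assumes e: "0 < e" "e \<le> 1" and r: "1 \<le> \<rho>" "\<rho> \<le> 1 + e / 2" and E0: "0 \<le> E0"
  shows "\<rho> * ((1 - e) * (1 + (1 - e / 2) ^ j * E0 + 2 * (\<rho> - 1) / e) + e)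
         \<le> 1 + (1 - e / 2) ^ Suc j * E0 + 2 * (\<rho> - 1) / e"
proof -
  define E where "E = (1 - e / 2) ^ j * E0 + 2 * (\<rho> - 1) / e"
  have E: "0 \<le> E" unfolding E_def using e r E0
    by (intro add_nonneg_nonneg mult_nonneg_nonneg divide_nonneg_pos) auto
  have contract: "\<rho> * (1 - e) \<le> 1 - e / 2"
  proof -
    have "\<rho> * (1 - e) \<le> (1 + e / 2) * (1 - e)" using r e by (intro mult_right_mono) auto
    also have "\<dots> \<le> 1 - e / 2" using e by (simp add: algebra_simps)
    finally show ?thesis .
  qed
  have "\<rho> * ((1 - e) * (1 + E) + e) = \<rho> * (1 - e) * E + \<rho>" by (simp add: algebra_simps)
  also have "\<dots> \<le> (1 - e / 2) * E + \<rho>" using contract E by (simp add: mult_right_mono)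
  also have "\<dots> = 1 + (1 - e / 2) ^ Suc j * E0 + 2 * (\<rho> - 1) / e"
    unfolding E_def using e by (simp add: field_simps)
  finally show ?thesis by (simp add: E_def add.assoc)
qed

locale cone_setting =
  fixes m :: nat and b \<alpha> :: real
  assumes m_pos: "1 \<le> m" and alpha_pos: "0 < \<alpha>" and alpha_lt_1: "\<alpha> < 1" and b_pos: "0 < b"
begin

abbreviation "S \<equiv> Sigma_space m"
abbreviation "K \<equiv> cone_exponent b \<alpha>"
abbreviation "K0 \<equiv> cone_exponent b \<alpha> 0"

lemma K_nonneg: "0 \<le> K c" using alpha_pos alpha_lt_1 b_pos by (simp add: cone_exponent_def)

lemma K_antimono: assumes "c \<le> c'" shows "K c' \<le> K c"
proof -
  have "\<alpha> ^ (c' + 1) \<le> \<alpha> ^ (c + 1)" using alpha_pos alpha_lt_1 assms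
    by (intro power_decreasing) auto
  then have "2 * b * \<alpha> ^ (c' + 1) \<le> 2 * b * \<alpha> ^ (c + 1)" using b_pos by simp
  then show ?thesis unfolding cone_exponent_def using alpha_lt_1 by (intro divide_right_mono) auto
qed

lemma K_eq_power: "K c = (2 * b * \<alpha> / (1 - \<alpha>)) * \<alpha> ^ c"
  by (simp add: cone_exponent_def field_simps)

lemma suminf_eq_K: "(\<Sum>j. 2 * b * \<alpha> ^ (c + 1 + j)) = K c"
proof -
  have "(\<lambda>j. 2 * b * \<alpha> ^ (c + 1 + j)) = (\<lambda>j. (2 * b * \<alpha> ^ (c + 1)) * \<alpha> ^ j)"
    by (simp add: power_add mult_ac)
  moreover have "(\<Sum>j. (2 * b * \<alpha> ^ (c + 1)) * \<alpha> ^ j) = (2 * b * \<alpha> ^ (c + 1)) * (1 / (1 - \<alpha>))"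
    by (subst suminf_mult) (use alpha_pos alpha_lt_1 in \<open>auto simp: suminf_geometric\<close>)
  ultimately show ?thesis by (simp add: cone_exponent_def)
qed

lemma Sigma_space_nonempty: "\<exists>x. x \<in> S"
  using m_pos by (intro exI[of _ "\<lambda>_. 1"]) (auto simp: Sigma_space_def)

lemma Lambda_cone_imp_cone:
  assumes "f \<in> Lambda_cone m b \<alpha>" "x0 \<in> S" "0 < f x0"
  shows "pos_cone m b \<alpha> f"
proof -
  have le: "f x \<le> exp (K (cpl x y)) * f y" if "x \<in> S" "y \<in> S" "x \<noteq> y" for x y
  proof -
    have "f x \<le> exp (\<Sum>j. 2 * b * \<alpha> ^ (cpl x y + 1 + j)) * f y"
      using assms(1) that unfolding Lambda_cone_def by blast
    then show ?thesis by (simp only: suminf_eq_K)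
  qed
  have "0 < f x" if "x \<in> S" for x
  proof (cases "x = x0")
    case False
    then have "f x0 \<le> exp (K (cpl x0 x)) * f x" using le assms that by auto
    moreover have "0 < exp (K (cpl x0 x))" by simp
    ultimately show ?thesis using assms(3) by (metis less_le_trans zero_less_mult_pos)
  qed (use assms in auto)
  with le show ?thesis by (auto simp: pos_cone_def)
qed

lemma cone_pos: "pos_cone m b \<alpha> f \<Longrightarrow> x \<in> S \<Longrightarrow> 0 < f x" by (simp add: pos_cone_def)

lemma cone_le_if_agree:
  assumes "pos_cone m b \<alpha> f" "x \<in> S" "y \<in> S" "\<forall>n<N. x n = y n"
  shows "f x \<le> exp (K N) * f y"
proof (cases "x = y")
  case True
  then show ?thesis using cone_pos[OF assms(1,3)] K_nonneg[of N] by simp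
next
  case False
  then have "f x \<le> exp (K (cpl x y)) * f y" using assms by (auto simp: pos_cone_def)
  also have "\<dots> \<le> exp (K N) * f y"
    using K_antimono[OF cpl_ge_if_agree[OF False assms(4)]] cone_pos[OF assms(1,3)] by simp
  finally show ?thesis .
qed

lemma cone_le: "pos_cone m b \<alpha> f \<Longrightarrow> x \<in> S \<Longrightarrow> y \<in> S \<Longrightarrow> f x \<le> exp K0 * f y"
  using cone_le_if_agree[of f x y 0] by simp

lemma cone_const: "0 < c \<Longrightarrow> pos_cone m b \<alpha> (\<lambda>_. c)"
  using K_nonneg by (auto simp: pos_cone_def)

lemma cone_cmult: assumes "pos_cone m b \<alpha> f" "0 < c" shows "pos_cone m b \<alpha> (\<lambda>x. c * f x)"
  unfolding pos_cone_def
proof (intro conjI ballI impI)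
  fix x assume "x \<in> S" then show "0 < c * f x" using assms cone_pos by simp
next
  fix x y assume xy: "x \<in> S" "y \<in> S" "x \<noteq> y"
  then have "f x \<le> exp (K (cpl x y)) * f y" using assms(1) unfolding pos_cone_def by blast
  then have "c * f x \<le> c * (exp (K (cpl x y)) * f y)" using assms(2) by simp
  then show "c * f x \<le> exp (K (cpl x y)) * (c * f y)" by (simp add: mult_ac)
qed

lemma birkhoff_sum_diff_le:
  assumes "holder_potential m b \<alpha> phi" "x \<in> S" "y \<in> S" "x \<noteq> y" "w \<in> words m"
  shows "\<bar>birkhoff_sum phi w x - birkhoff_sum phi w y\<bar>
      \<le> b * \<alpha> ^ (cpl x y + 1) * (1 - \<alpha> ^ length w) / (1 - \<alpha>)"
  using assms(5)
proof (induction w)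
  case Nil
  then show ?case by simp
next
  case (Cons i w)
  have w: "w \<in> words m" using Cons.prems by (auto simp: words_def)
  have "\<bar>phi (wcons (i # w) x) - phi (wcons (i # w) y)\<bar>
      \<le> b * \<alpha> ^ cpl (wcons (i # w) x) (wcons (i # w) y)"
    using assms(1) wcons_in_Sigma_space[OF assms(2) Cons.prems] wcons_in_Sigma_space[OF assms(3) Cons.prems] wcons_neq[OF assms(4)]
    by (auto simp: holder_potential_def)
  also have "\<dots> = b * \<alpha> ^ (cpl x y + 1) * \<alpha> ^ length w"
    by (simp add: cpl_wcons[OF assms(4)] power_add mult_ac)
  finally have head: "\<bar>phi (wcons (i # w) x) - phi (wcons (i # w) y)\<bar>
      \<le> b * \<alpha> ^ (cpl x y + 1) * \<alpha> ^ length w" .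
  have "\<bar>birkhoff_sum phi (i # w) x - birkhoff_sum phi (i # w) y\<bar>
     \<le> b * \<alpha> ^ (cpl x y + 1) * \<alpha> ^ length w + b * \<alpha> ^ (cpl x y + 1) * (1 - \<alpha> ^ length w) / (1 - \<alpha>)"
    using head Cons.IH[OF w] by simp
  also have "\<dots> = b * \<alpha> ^ (cpl x y + 1) * (1 - \<alpha> ^ length (i # w)) / (1 - \<alpha>)"
    using alpha_lt_1 by (simp add: field_simps)
  finally show ?case .
qed

lemma birkhoff_sum_diff_le_K:
  assumes "holder_potential m b \<alpha> phi" "x \<in> S" "y \<in> S" "x \<noteq> y" "w \<in> words m"
  shows "\<bar>birkhoff_sum phi w x - birkhoff_sum phi w y\<bar> \<le> K (cpl x y) / 2"
proof -
  have "b * \<alpha> ^ (cpl x y + 1) * (1 - \<alpha> ^ length w) / (1 - \<alpha>) \<le> b * \<alpha> ^ (cpl x y + 1) * 1 / (1 - \<alpha>)"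
    using alpha_pos alpha_lt_1 b_pos by (intro divide_right_mono mult_left_mono) auto
  moreover have "K (cpl x y) / 2 = b * \<alpha> ^ (cpl x y + 1) * 1 / (1 - \<alpha>)" using alpha_lt_1
    by (simp add: cone_exponent_def field_simps)
  ultimately show ?thesis using birkhoff_sum_diff_le[OF assms] by linarith
qed

lemma cone_exp_birkhoff_sum:
  assumes "holder_potential m b \<alpha> phi" "w \<in> words m"
  shows "pos_cone m b \<alpha> (\<lambda>x. exp (birkhoff_sum phi w x))"
  unfolding pos_cone_def
proof (intro conjI ballI impI)
  fix x y assume xy: "x \<in> S" "y \<in> S" "x \<noteq> y"
  have "birkhoff_sum phi w x \<le> K (cpl x y) + birkhoff_sum phi w y"
    using birkhoff_sum_diff_le_K[OF assms(1) xy assms(2)] K_nonneg[of "cpl x y"] by linarith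
  then show "exp (birkhoff_sum phi w x) \<le> exp (K (cpl x y)) * exp (birkhoff_sum phi w y)"
    by (simp add: exp_add[symmetric])
qed simp

lemma cone_transfer:
  assumes "holder_potential m b \<alpha> phi" "pos_cone m b \<alpha> f"
  shows "pos_cone m b \<alpha> (transfer m phi f)"
  unfolding pos_cone_def
proof (intro conjI ballI impI)
  fix x assume x: "x \<in> S"
  show "0 < transfer m phi f x"
    unfolding transfer_def using m_pos
    by (intro sum_pos) (auto intro!: mult_pos_pos cone_pos[OF assms(2)] scons_in_Sigma_space[OF x])
next
  fix x y assume xy: "x \<in> S" "y \<in> S" "x \<noteq> y"
  let ?c = "cpl x y"
  have key: "exp (phi (scons i x)) * f (scons i x)
      \<le> exp (K ?c) * (exp (phi (scons i y)) * f (scons i y))"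
    if i: "i \<in> {1..m}" for i
  proof -
    have sx: "scons i x \<in> S" and sy: "scons i y \<in> S" using scons_in_Sigma_space i xy by auto
    have ne: "scons i x \<noteq> scons i y" using wcons_neq[OF xy(3), of "[i]"]
      by (simp add: scons_wcons[of i "[]", simplified])
    have cp: "cpl (scons i x) (scons i y) = Suc ?c"
      using cpl_wcons[OF xy(3), of "[i]"] by (simp add: scons_wcons[of i "[]", simplified])
    have phi_le: "phi (scons i x) \<le> phi (scons i y) + b * \<alpha> ^ Suc ?c"
    proof -
      have "\<bar>phi (scons i x) - phi (scons i y)\<bar> \<le> b * \<alpha> ^ cpl (scons i x) (scons i y)"
        using assms(1) sx sy ne unfolding holder_potential_def by blast
      then show ?thesis using cp by simp
    qed
    have f_le: "f (scons i x) \<le> exp (K (Suc ?c)) * f (scons i y)"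
    proof -
      have "f (scons i x) \<le> exp (K (cpl (scons i x) (scons i y))) * f (scons i y)"
        using assms(2) sx sy ne unfolding pos_cone_def by blast
      then show ?thesis using cp by simp
    qed
    have K_step: "b * \<alpha> ^ Suc ?c + K (Suc ?c) \<le> K ?c"
    proof -
      have "K ?c = K (Suc ?c) + 2 * b * \<alpha> ^ Suc ?c" using alpha_lt_1
        by (simp add: cone_exponent_def field_simps)
      moreover have "0 \<le> b * \<alpha> ^ Suc ?c" using alpha_pos b_pos by simp
      ultimately show ?thesis by linarith
    qed
    have "exp (phi (scons i x)) * f (scons i x)
        \<le> exp (phi (scons i y) + b * \<alpha> ^ Suc ?c) * (exp (K (Suc ?c)) * f (scons i y))"
      using phi_le f_le cone_pos[OF assms(2) sx] by (intro mult_mono) auto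
    also have "\<dots> = exp (b * \<alpha> ^ Suc ?c + K (Suc ?c)) * (exp (phi (scons i y)) * f (scons i y))"
      by (simp add: exp_add mult_ac)
    also have "\<dots> \<le> exp (K ?c) * (exp (phi (scons i y)) * f (scons i y))"
      using K_step cone_pos[OF assms(2) sy] by (intro mult_right_mono) auto
    finally show ?thesis .
  qed
  show "transfer m phi f x \<le> exp (K ?c) * transfer m phi f y"
    unfolding transfer_def sum_distrib_left by (intro sum_mono key)
qed

lemma cone_transfer_iter:
  assumes "holder_potential m b \<alpha> phi" "pos_cone m b \<alpha> f"
  shows "pos_cone m b \<alpha> (transfer_iter m phi n f)"
  by (induction n) (auto simp: transfer_iter_Suc' intro: cone_transfer[OF assms(1)] assms(2))

lemma exp_K_minus_one_le: "exp (K c) - 1 \<le> (2 * b * \<alpha> / (1 - \<alpha>)) * exp K0 * \<alpha> ^ c"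
proof -
  have "exp (K c) - 1 \<le> K c * exp (K c)"
  proof -
    have "1 - K c \<le> exp (- K c)" using exp_ge_add_one_self[of "- K c"] by simp
    then have "(1 - K c) * exp (K c) \<le> exp (- K c) * exp (K c)" by (intro mult_right_mono) auto
    then show ?thesis by (simp add: exp_minus field_simps)
  qed
  also have "\<dots> \<le> K c * exp K0" using K_antimono[of 0 c] K_nonneg by (intro mult_left_mono) auto
  finally show ?thesis by (simp add: K_eq_power mult_ac)
qed

abbreviation "eps \<equiv> exp (- 3 * K0)"

lemma eps_pos: "0 < eps" by simp
lemma eps_le1: "eps \<le> 1" using K_nonneg[of 0] by simp

text \<open>Bound on the oscillation of \<open>L\<^bsup>j k\<^esup> f / L\<^bsup>j k\<^esup> g\<close> after \<open>j\<close> blocks of length \<open>k\<close>: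
  it starts at \<open>e\<^bsup>2 K\<^sub>0\<^esup>\<close> and satisfies the recursion of \<open>mixing_factor_Suc\<close>.\<close>
definition mixing_factor :: "nat \<Rightarrow> nat \<Rightarrow> real" where
  "mixing_factor k j = 1 + (1 - eps / 2) ^ j * (exp (2 * K0) - 1) + 2 * (exp (2 * K k) - 1) / eps"

lemma mixing_factor_ge_1: "1 \<le> mixing_factor k j"
proof -
  have "0 \<le> (1 - eps / 2) ^ j" using eps_le1 by (intro zero_le_power) linarith
  moreover have "0 \<le> exp (2 * K0) - 1" "0 \<le> 2 * (exp (2 * K k) - 1) / eps"
    using K_nonneg[of 0] K_nonneg[of k] by simp_all
  ultimately show ?thesis unfolding mixing_factor_def by simp
qed

lemma mixing_factor_Suc:
  assumes "exp (2 * K k) \<le> 1 + eps / 2"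
  shows "exp (2 * K k) * ((1 - eps) * mixing_factor k j + eps) \<le> mixing_factor k (Suc j)"
  unfolding mixing_factor_def
  by (rule mixing_step) (use eps_pos eps_le1 assms K_nonneg[of k] K_nonneg[of 0] in auto)

lemma block_length_exists: "\<exists>k0. \<forall>k\<ge>k0. exp (2 * K k) \<le> 1 + eps / 2"
proof -
  have "K \<longlonglongrightarrow> 0"
    unfolding K_eq_power using alpha_pos alpha_lt_1
      by (intro tendsto_mult_right_zero LIMSEQ_power_zero) auto
  then have "(\<lambda>k. exp (2 * K k)) \<longlonglongrightarrow> exp (2 * 0)" by (intro tendsto_intros)
  then have "\<forall>\<^sub>F k in sequentially. exp (2 * K k) < 1 + eps / 2"
    using eps_pos by (intro order_tendstoD(2)) auto
  then show ?thesis unfolding eventually_sequentially by (meson less_imp_le)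
qed

lemma exp_2K_minus_one_le: "exp (2 * K k) - 1
    \<le> (2 * b * \<alpha> / (1 - \<alpha>)) * exp K0 * (exp K0 + 1) * \<alpha> ^ k"
proof -
  have "exp (2 * K k) - 1 = (exp (K k) - 1) * (exp (K k) + 1)"
    by (simp add: algebra_simps exp_add[symmetric])
  also have "\<dots> \<le> ((2 * b * \<alpha> / (1 - \<alpha>)) * exp K0 * \<alpha> ^ k) * (exp K0 + 1)"
    using exp_K_minus_one_le[of k] K_antimono[of 0 k] K_nonneg[of k] alpha_pos alpha_lt_1 b_pos
    by (intro mult_mono) auto
  finally show ?thesis by (simp add: mult_ac)
qed

lemma mixing_factor_le_exp:
  obtains \<beta> C where "0 < \<beta>" "\<beta> < 1" "0 \<le> C" "\<And>k. mixing_factor k k \<le> exp (C * \<beta> ^ k)"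
proof -
  define \<beta> where "\<beta> = max (1 - eps / 2) \<alpha>"
  define A where "A = (2 * b * \<alpha> / (1 - \<alpha>)) * exp K0 * (exp K0 + 1)"
  define C where "C = (exp (2 * K0) - 1) + 2 * A / eps"
  have \<beta>: "0 < \<beta>" "\<beta> < 1" "1 - eps / 2 \<le> \<beta>" "\<alpha> \<le> \<beta>"
    unfolding \<beta>_def using eps_pos eps_le1 alpha_pos alpha_lt_1 by auto
  have E0: "0 \<le> exp (2 * K0) - 1" using K_nonneg[of 0] by simp
  have A: "0 \<le> A" unfolding A_def using alpha_pos alpha_lt_1 b_pos by simp
  have "mixing_factor k k \<le> exp (C * \<beta> ^ k)" for k
  proof -
    have "2 * (exp (2 * K k) - 1) / eps \<le> 2 * (A * \<alpha> ^ k) / eps"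
      using exp_2K_minus_one_le[of k] eps_pos unfolding A_def by (intro divide_right_mono) auto
    also have "\<dots> \<le> 2 * (A * \<beta> ^ k) / eps"
      using A \<beta> alpha_pos eps_pos by (intro divide_right_mono mult_left_mono power_mono) auto
    moreover have "(1 - eps / 2) ^ k * (exp (2 * K0) - 1) \<le> \<beta> ^ k * (exp (2 * K0) - 1)"
      using \<beta> eps_le1 E0 by (intro mult_right_mono power_mono) linarith+
    ultimately have "mixing_factor k k \<le> 1 + C * \<beta> ^ k"
      unfolding mixing_factor_def C_def by (simp add: algebra_simps)
    also have "\<dots> \<le> exp (C * \<beta> ^ k)" by (rule exp_ge_add_one_self)
    finally show ?thesis .
  qed
  moreover have "0 \<le> C" unfolding C_def using E0 A eps_pos by simp
  ultimately show thesis using that \<beta> by blast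
qed

lemma birkhoff_sum_le:
  assumes "holder_potential m b \<alpha> phi" "x \<in> S" "y \<in> S" "w \<in> words m"
  shows "birkhoff_sum phi w x \<le> birkhoff_sum phi w y + K0 / 2"
proof (cases "x = y")
  case True then show ?thesis using K_nonneg[of 0] by simp
next
  case False
  then show ?thesis
    using birkhoff_sum_diff_le_K[OF assms(1-3) False assms(4)] K_antimono[of 0 "cpl x y"]
      by linarith
qed

lemma words_len_nonempty: "words_len m n \<noteq> {}"
proof -
  have "replicate n 1 \<in> words_len m n" using m_pos by (auto simp: words_len_def words_def)
  then show ?thesis by auto
qed

lemma birkhoff_weight_le:
  assumes H: "holder_potential m b \<alpha> phi" and g: "pos_cone m b \<alpha> g"
    and x: "x \<in> S" and y: "y \<in> S" and w: "w \<in> words m"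
  shows "exp (birkhoff_sum phi w x) * g (wcons w x)
      \<le> exp (3 * K0 / 2) * (exp (birkhoff_sum phi w y) * g (wcons w y))"
proof -
  have "exp (birkhoff_sum phi w x) * g (wcons w x)
      \<le> exp (birkhoff_sum phi w y + K0 / 2) * (exp K0 * g (wcons w y))"
    using birkhoff_sum_le[OF H x y w] cone_le[OF g] cone_pos[OF g] wcons_in_Sigma_space x y w
    by (intro mult_mono) (auto intro: less_imp_le)
  also have "\<dots> = exp (3 * K0 / 2) * (exp (birkhoff_sum phi w y) * g (wcons w y))"
    by (simp add: exp_add[symmetric] mult_ac)
  finally show ?thesis .
qed

text \<open>A block of \<open>k\<close> iterations averages the ratios \<open>f/g\<close> over the preimages \<open>w x\<close>,
  \<open>|w| = k\<close>, with weights that are comparable up to \<open>e\<^bsup>3 K\<^sub>0/2\<^esup>\<close> at any two points;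
  this overlap of the weights contracts the oscillation of the ratio.\<close>
lemma transfer_iter_ratio_contraction:
  assumes H: "holder_potential m b \<alpha> phi" and f: "pos_cone m b \<alpha> f" and g: "pos_cone m b \<alpha> g"
    and Q: "\<forall>x\<in>S. \<forall>y\<in>S. f x / g x \<le> Q * (f y / g y)"
    and x: "x \<in> S" and y: "y \<in> S"
  shows "transfer_iter m phi k f x / transfer_iter m phi k g x
    \<le> exp (2 * K k) * ((1 - eps) * Q + eps) * (transfer_iter m phi k f y / transfer_iter m phi k g y)"
proof -
  let ?W = "words_len m k"
  define a where "a z w = exp (birkhoff_sum phi w z) * g (wcons w z)" for z w
  define R where "R z w = f (wcons w z) / g (wcons w z)" for z w
  have in_S: "wcons w z \<in> S" if "z \<in> S" "w \<in> ?W" for z w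
    using that wcons_in_Sigma_space by (auto simp: words_len_def)
  have a_pos: "\<forall>w\<in>?W. 0 < a z w" if "z \<in> S" for z
    using in_S[OF that] cone_pos[OF g] by (auto simp: a_def)
  have iter_eq: "transfer_iter m phi k f z = (\<Sum>w\<in>?W. a z w * R z w)"
    "transfer_iter m phi k g z = sum (a z) ?W" if "z \<in> S" for z
    unfolding transfer_iter_eq_sum a_def R_def
    using cone_pos[OF g in_S[OF that]] by (auto intro!: sum.cong simp: less_imp_neq[symmetric])
  have "eps * (a y w / sum (a y) ?W) \<le> a x w / sum (a x) ?W" if w: "w \<in> ?W" for w
  proof -
    have "\<forall>w\<in>?W. a x w \<le> exp (3 * K0 / 2) * a y w" "\<forall>w\<in>?W. a y w \<le> exp (3 * K0 / 2) * a x w"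
      using birkhoff_weight_le[OF H g x y] birkhoff_weight_le[OF H g y x]
        by (auto simp: a_def words_len_def)
    from normalized_weight_ge[OF finite_words_len a_pos[OF y] exp_gt_zero this w]
    show ?thesis by (simp add: power2_eq_square exp_add[symmetric] exp_minus field_simps)
  qed
  moreover have "\<forall>w\<in>?W. R x w \<le> exp (2 * K k) * R y w"
  proof
    fix w assume w: "w \<in> ?W"
    have agree: "\<forall>n<k. wcons w x n = wcons w y n" "\<forall>n<k. wcons w y n = wcons w x n"
      using w by (auto simp: words_len_def wcons_def)
    have "f (wcons w x) * g (wcons w y) \<le> (exp (K k) * f (wcons w y)) * (exp (K k) * g (wcons w x))"
      using cone_le_if_agree[OF f in_S[OF x w] in_S[OF y w] agree(1)]
        cone_le_if_agree[OF g in_S[OF y w] in_S[OF x w] agree(2)] cone_pos[OF g] cone_pos[OF f] in_S x y w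
      by (intro mult_mono) (auto intro: less_imp_le)
    then show "R x w \<le> exp (2 * K k) * R y w"
      using cone_pos[OF g] in_S x y w by (simp add: R_def field_simps exp_add[symmetric] mult_ac)
  qed
  moreover have "\<forall>w\<in>?W. \<forall>w'\<in>?W. R y w \<le> Q * R y w'" using Q in_S[OF y] by (auto simp: R_def)
  ultimately show ?thesis unfolding iter_eq[OF x] iter_eq[OF y]
    by (intro weighted_average_contraction[OF finite_words_len words_len_nonempty a_pos[OF x] a_pos[OF y]]) auto
qed

lemma transfer_iter_ratio_bound:
  assumes H: "holder_potential m b \<alpha> phi" and f: "pos_cone m b \<alpha> f" and g: "pos_cone m b \<alpha> g"
    and k: "exp (2 * K k) \<le> 1 + eps / 2"
    and x: "x \<in> S" and y: "y \<in> S"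
  shows "transfer_iter m phi (j * k) f x / transfer_iter m phi (j * k) g x \<le>
     mixing_factor k j * (transfer_iter m phi (j * k) f y / transfer_iter m phi (j * k) g y)"
  using x y
proof (induction j arbitrary: x y)
  case 0
  have pos: "0 < f y" "0 < g x" "0 < g y" using cone_pos f g 0 by auto
  have "f x * g y \<le> (exp K0 * f y) * (exp K0 * g x)"
    using cone_le[OF f 0(1,2)] cone_le[OF g 0(2,1)] pos by (intro mult_mono) auto
  then have "f x / g x \<le> exp (2 * K0) * (f y / g y)"
    using pos by (simp add: field_simps exp_add[symmetric] mult_ac)
  also have "\<dots> \<le> mixing_factor k 0 * (f y / g y)"
    using pos K_nonneg[of k] by (intro mult_right_mono) (auto simp: mixing_factor_def)
  finally show ?case by simp
next
  case (Suc j)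
  define f' where "f' = transfer_iter m phi (j * k) f"
  define g' where "g' = transfer_iter m phi (j * k) g"
  have cf: "pos_cone m b \<alpha> f'" "pos_cone m b \<alpha> g'" unfolding f'_def g'_def
    using cone_transfer_iter H f g by auto
  have IH: "\<forall>x\<in>S. \<forall>y\<in>S. f' x / g' x \<le> mixing_factor k j * (f' y / g' y)"
    using Suc.IH unfolding f'_def g'_def by blast
  have split: "transfer_iter m phi (Suc j * k) F
      = transfer_iter m phi k (transfer_iter m phi (j * k) F)" for F
    by (simp add: transfer_iter_add[symmetric] add.commute)
  have "transfer_iter m phi k f' x / transfer_iter m phi k g' x
      \<le> exp (2 * K k) * ((1 - eps) * mixing_factor k j + eps) * (transfer_iter m phi k f' y / transfer_iter m phi k g' y)"
    by (rule transfer_iter_ratio_contraction[OF H cf IH Suc.prems])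
  also have "\<dots> \<le> mixing_factor k (Suc j) * (transfer_iter m phi k f' y / transfer_iter m phi k g' y)"
    using mixing_factor_Suc[OF k] cone_pos[OF cone_transfer_iter[OF H cf(1)] Suc.prems(2)]
      cone_pos[OF cone_transfer_iter[OF H cf(2)] Suc.prems(2)]
    by (intro mult_right_mono) (auto intro: less_imp_le)
  finally show ?case unfolding split f'_def g'_def .
qed

lemma holder_continuous:
  assumes "holder_potential m b \<alpha> phi" shows "continuous_on S phi"
proof (rule continuous_on_Sigma_spaceI)
  fix x and e :: real assume x: "x \<in> S" and e: "0 < e"
  obtain N where N: "\<alpha> ^ N < e / b" using real_arch_pow_inv[of "e / b" \<alpha>] e b_pos alpha_lt_1 by auto
  show "\<exists>N. \<forall>y\<in>S. (\<forall>n<N. y n = x n) \<longrightarrow> \<bar>phi y - phi x\<bar> < e"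
  proof (intro exI ballI impI)
    fix y assume y: "y \<in> S" and agree: "\<forall>n<N. y n = x n"
    show "\<bar>phi y - phi x\<bar> < e"
    proof (cases "y = x")
      case False
      then have "\<bar>phi y - phi x\<bar> \<le> b * \<alpha> ^ cpl y x" using assms x y
        by (auto simp: holder_potential_def)
      also have "\<dots> \<le> b * \<alpha> ^ N"
        using cpl_ge_if_agree[OF False agree] alpha_pos alpha_lt_1 b_pos
        by (intro mult_left_mono power_decreasing) auto
      also have "\<dots> < e" using N b_pos by (simp add: field_simps)
      finally show ?thesis .
    qed (use e in auto)
  qed
qed

lemma cone_continuous:
  assumes f: "pos_cone m b \<alpha> f" shows "continuous_on S f"
proof (rule continuous_on_Sigma_spaceI)
  fix x and e :: real assume x: "x \<in> S" and e: "0 < e"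
  have "K \<longlonglongrightarrow> 0"
    unfolding K_eq_power using alpha_pos alpha_lt_1
      by (intro tendsto_mult_right_zero LIMSEQ_power_zero) auto
  then have "(\<lambda>N. (exp (K N) - 1) * (exp K0 * f x)) \<longlonglongrightarrow> (exp 0 - 1) * (exp K0 * f x)"
    by (intro tendsto_intros)
  then have "\<forall>\<^sub>F N in sequentially. (exp (K N) - 1) * (exp K0 * f x) < e"
    using e by (intro order_tendstoD(2)) auto
  then obtain N where N: "(exp (K N) - 1) * (exp K0 * f x) < e"
    by (auto simp: eventually_sequentially)
  show "\<exists>N. \<forall>y\<in>S. (\<forall>n<N. y n = x n) \<longrightarrow> \<bar>f y - f x\<bar> < e"
  proof (intro exI ballI impI)
    fix y assume y: "y \<in> S" and agree: "\<forall>n<N. y n = x n"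
    have agree': "\<forall>n<N. x n = y n" using agree by simp
    have d: "0 \<le> exp (K N) - 1" using K_nonneg[of N] by simp
    have "f y - f x \<le> (exp (K N) - 1) * f x"
      using cone_le_if_agree[OF f y x agree] by (simp add: algebra_simps)
    also have "\<dots> \<le> (exp (K N) - 1) * (exp K0 * f x)"
      using cone_le[OF f x x] d by (rule mult_left_mono)
    finally have "f y - f x \<le> (exp (K N) - 1) * (exp K0 * f x)" .
    moreover have "f x - f y \<le> (exp (K N) - 1) * f y"
      using cone_le_if_agree[OF f x y agree'] by (simp add: algebra_simps)
    moreover have "\<dots> \<le> (exp (K N) - 1) * (exp K0 * f x)"
      using cone_le[OF f y x] d by (rule mult_left_mono)
    ultimately have "\<bar>f y - f x\<bar> \<le> (exp (K N) - 1) * (exp K0 * f x)" by linarith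
    with N show "\<bar>f y - f x\<bar> < e" by linarith
  qed
qed

lemma continuous_on_transfer:
  assumes "holder_potential m b \<alpha> phi" "continuous_on S f"
  shows "continuous_on S (transfer m phi f)"
  unfolding transfer_def
  by (intro continuous_intros continuous_on_compose_scons holder_continuous assms) auto

lemma continuous_on_transfer_iter:
  assumes "holder_potential m b \<alpha> phi" "continuous_on S f"
  shows "continuous_on S (transfer_iter m phi n f)"
  by (induction n) (auto simp: transfer_iter_Suc' intro: continuous_on_transfer assms)

end

locale cone_measure = cone_setting +
  fixes \<mu> :: "(nat \<Rightarrow> nat) measure"
  assumes prob_space_mu: "prob_space \<mu>" and sets_mu: "sets \<mu> = sets (Sigma_M m)"
begin

lemma space_measure: "space \<mu> = S"
  using sets_eq_imp_space_eq[OF sets_mu] by (simp add: space_Sigma_M)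

lemma borel_measurable_continuous: "continuous_on S f \<Longrightarrow> f \<in> borel_measurable \<mu>"
  using borel_measurable_Sigma_M_continuous measurable_cong_sets[OF sets_mu refl] by blast

lemma integrable_bounded_continuous:
  fixes f :: "_ \<Rightarrow> real"
  assumes "continuous_on S f" "\<forall>x\<in>S. \<bar>f x\<bar> \<le> B"
  shows "integrable \<mu> f"
  by (rule finite_measure.integrable_const_bound[OF prob_space.finite_measure[OF prob_space_mu], where B=B])
     (use assms space_measure borel_measurable_continuous in auto)

lemma integrable_cone:
  fixes f :: "_ \<Rightarrow> real"
  assumes "pos_cone m b \<alpha> f"
  shows "integrable \<mu> f"
proof -
  obtain x0 where x0: "x0 \<in> S" using Sigma_space_nonempty by blast
  show ?thesis
  proof (rule integrable_bounded_continuous[OF cone_continuous[OF assms], where B="exp K0 * f x0"])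
    show "\<forall>x\<in>S. \<bar>f x\<bar> \<le> exp K0 * f x0"
      using cone_le[OF assms _ x0] cone_pos[OF assms] by (auto simp: less_imp_le)
  qed
qed

lemma integral_mono_Sigma:
  fixes f g :: "_ \<Rightarrow> real"
  assumes "integrable \<mu> f" "integrable \<mu> g" "\<forall>x\<in>S. f x \<le> g x"
  shows "(\<integral>x. f x \<partial>\<mu>) \<le> (\<integral>x. g x \<partial>\<mu>)"
  by (rule Bochner_Integration.integral_mono) (use assms space_measure in auto)

lemma integral_const_prob: "(\<integral>x. c \<partial>\<mu>) = (c::real)"
  using prob_space.prob_space[OF prob_space_mu] by (simp add: prob_space_def)

lemma integral_cong_Sigma: fixes f g :: "_ \<Rightarrow> real" shows "\<forall>x\<in>S. f x = g x \<Longrightarrow> (\<integral>x. f x \<partial>\<mu>)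
    = (\<integral>x. g x \<partial>\<mu>)"
  by (rule Bochner_Integration.integral_cong) (auto simp: space_measure)

lemma integral_cone_pos:
  fixes f :: "_ \<Rightarrow> real"
  assumes "pos_cone m b \<alpha> f" shows "0 < (\<integral>x. f x \<partial>\<mu>)"
proof -
  obtain x0 where x0: "x0 \<in> S" using Sigma_space_nonempty by blast
  have "(\<integral>x. exp (- K0) * f x0 \<partial>\<mu>) \<le> (\<integral>x. f x \<partial>\<mu>)"
  proof (rule integral_mono_Sigma)
    show "\<forall>x\<in>S. exp (- K0) * f x0 \<le> f x"
      using cone_le[OF assms x0] by (auto simp: exp_minus field_simps)
  next
    show "integrable \<mu> (\<lambda>x. exp (- K0) * f x0)"
      by (rule integrable_cone[OF cone_const]) (use cone_pos[OF assms x0] in simp)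
  qed (rule integrable_cone[OF assms])
  moreover have "0 < exp (- K0) * f x0" using cone_pos[OF assms x0] by simp
  ultimately show ?thesis unfolding integral_const_prob by linarith
qed

lemma integral_sandwich:
  fixes G h :: "_ \<Rightarrow> real"
  assumes G: "pos_cone m b \<alpha> G" and h: "pos_cone m b \<alpha> h" and Q: "0 < Q"
    and mixq: "\<forall>x\<in>S. \<forall>y\<in>S. G x / h x \<le> Q * (G y / h y)" and y0: "y0 \<in> S"
  shows "(\<integral>x. G x \<partial>\<mu>) \<le> Q * (G y0 / h y0) * (\<integral>x. h x \<partial>\<mu>)"
    and "(G y0 / h y0) / Q * (\<integral>x. h x \<partial>\<mu>) \<le> (\<integral>x. G x \<partial>\<mu>)"
proof -
  define \<kappa> where "\<kappa> = G y0 / h y0"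
  have p1: "G x \<le> Q * \<kappa> * h x" if x: "x \<in> S" for x
  proof -
    have "G x / h x \<le> Q * \<kappa>" using mixq x y0 by (auto simp: \<kappa>_def)
    then show ?thesis using cone_pos[OF h x] by (simp add: field_simps)
  qed
  have p2: "\<kappa> / Q * h x \<le> G x" if x: "x \<in> S" for x
  proof -
    have "\<kappa> \<le> Q * (G x / h x)" using mixq x y0 by (auto simp: \<kappa>_def)
    then show ?thesis using cone_pos[OF h x] Q by (simp add: field_simps)
  qed
  have "(\<integral>x. G x \<partial>\<mu>) \<le> (\<integral>x. Q * \<kappa> * h x \<partial>\<mu>)"
    by (rule integral_mono_Sigma) (use p1 integrable_cone G h in auto)
  then show "(\<integral>x. G x \<partial>\<mu>) \<le> Q * (G y0 / h y0) * (\<integral>x. h x \<partial>\<mu>)" by (simp add: \<kappa>_def)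
  have "(\<integral>x. \<kappa> / Q * h x \<partial>\<mu>) \<le> (\<integral>x. G x \<partial>\<mu>)"
    by (rule integral_mono_Sigma) (use p2 integrable_cone G h in auto)
  then show "(G y0 / h y0) / Q * (\<integral>x. h x \<partial>\<mu>) \<le> (\<integral>x. G x \<partial>\<mu>)" by (simp add: \<kappa>_def)
qed

end

locale perron_data = cone_measure +
  fixes p h :: "(nat \<Rightarrow> nat) \<Rightarrow> real" and r :: real
  assumes holder_p: "holder_potential m b \<alpha> p" and cone_h: "pos_cone m b \<alpha> h" and r_pos: "0 < r"
    and eigenfunction: "\<forall>x\<in>S. transfer m p h x = r * h x"
    and eigenmeasure: "\<And>f. continuous_on S f \<Longrightarrow> (\<integral>x. transfer m p f x \<partial>\<mu>) = r * (\<integral>x. f x \<partial>\<mu>)"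
    and normalized: "(\<integral>x. h x \<partial>\<mu>) = 1"
begin

lemma eigenvalue_le_perturbed:
  assumes h': "pos_cone m b \<alpha> h'" and eigen': "\<forall>x\<in>S. transfer m p' h' x = r' * h' x"
    and close: "\<forall>x\<in>S. p x \<le> p' x + \<delta>"
  shows "r \<le> exp \<delta> * r'"
proof -
  have "r * (\<integral>x. h' x \<partial>\<mu>) = (\<integral>x. transfer m p h' x \<partial>\<mu>)"
    using eigenmeasure[OF cone_continuous[OF h']] by simp
  also have "\<dots> \<le> (\<integral>x. exp \<delta> * r' * h' x \<partial>\<mu>)"
  proof (rule integral_mono_Sigma)
    show "integrable \<mu> (transfer m p h')"
      by (rule integrable_cone[OF cone_transfer[OF holder_p h']])
    show "integrable \<mu> (\<lambda>x. exp \<delta> * r' * h' x)"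
      by (intro integrable_mult_right integrable_cone[OF h'])
    show "\<forall>x\<in>S. transfer m p h' x \<le> exp \<delta> * r' * h' x"
    proof
      fix x assume x: "x \<in> S"
      have "transfer_iter m p 1 h' x \<le> exp (real 1 * \<delta>) * transfer_iter m p' 1 h' x"
        by (rule transfer_iter_le_perturbed[OF close _ x])
          (use cone_pos[OF h'] in \<open>auto simp: less_imp_le\<close>)
      then show "transfer m p h' x \<le> exp \<delta> * r' * h' x" using eigen' x
        by (simp add: transfer_iter_def)
    qed
  qed
  also have "\<dots> = exp \<delta> * r' * (\<integral>x. h' x \<partial>\<mu>)" by simp
  finally show ?thesis using integral_cone_pos[OF h'] by simp
qed

lemma integral_transfer_iter:
  assumes "continuous_on S f"
  shows "(\<integral>x. transfer_iter m p N f x \<partial>\<mu>) = r ^ N * (\<integral>x. f x \<partial>\<mu>)"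
proof (induction N)
  case (Suc N)
  have "(\<integral>x. transfer_iter m p (Suc N) f x \<partial>\<mu>) = r * (\<integral>x. transfer_iter m p N f x \<partial>\<mu>)"
    unfolding transfer_iter_Suc'
      by (rule eigenmeasure[OF continuous_on_transfer_iter[OF holder_p assms]])
  then show ?case using Suc.IH by simp
qed simp

lemma integral_birkhoff_cyl:
  assumes "continuous_on S f" "w \<in> words m"
  shows "(\<integral>x. exp (birkhoff_sum p w x) * f (wcons w x) \<partial>\<mu>)
      = r ^ length w * (\<integral>x. indicator (cyl m w) x * f x \<partial>\<mu>)"
  using assms
proof (induction w arbitrary: f)
  case Nil
  have "\<forall>x\<in>S. f x = indicator (cyl m []) x * f x" by (simp add: cyl_def)
  then show ?case using integral_cong_Sigma by simp
next
  case (Cons i w)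
  have i: "i \<in> {1..m}" and w: "w \<in> words m" using Cons.prems(2) by (auto simp: words_def)
  define g where "g y = exp (p (scons i y)) * f (scons i y)" for y
  have gc: "continuous_on S g" unfolding g_def
    by (intro continuous_intros continuous_on_exp continuous_on_compose_scons holder_continuous holder_p Cons.prems(1) i)
  have "(\<integral>x. exp (birkhoff_sum p (i # w) x) * f (wcons (i # w) x) \<partial>\<mu>)
      = (\<integral>x. exp (birkhoff_sum p w x) * g (wcons w x) \<partial>\<mu>)"
    by (simp add: g_def scons_wcons exp_add mult_ac)
  also have "\<dots> = r ^ length w * (\<integral>x. indicator (cyl m w) x * g x \<partial>\<mu>)"
    by (rule Cons.IH[OF gc w])
  also have "(\<integral>x. indicator (cyl m w) x * g x \<partial>\<mu>)
      = (\<integral>x. transfer m p (\<lambda>z. indicator (cyl m (i # w)) z * f z) x \<partial>\<mu>)"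
  proof (rule integral_cong_Sigma, intro ballI)
    fix y assume y: "y \<in> S"
    have ind: "indicator (cyl m (i # w)) (scons j y) = (if j
        = i then indicator (cyl m w) y else (0::real))"
      if j: "j \<in> {1..m}" for j
    proof -
      have "scons j y \<in> S" using scons_in_Sigma_space[OF y j] .
      moreover have "(\<forall>n<length (i # w). scons j y n = (i # w) ! n) \<longleftrightarrow> j = i \<and> (\<forall>n<length w. y n
          = w ! n)"
        by (auto simp: scons_def nth_Cons split: nat.splits)
      ultimately show ?thesis using y by (auto simp: cyl_def indicator_def)
    qed
    have "transfer m p (\<lambda>z. indicator (cyl m (i # w)) z * f z) y =
        (\<Sum>j\<in>{1..m}. if j = i then exp (p (scons i y)) * (indicator (cyl m w) y * f (scons i y)) else 0)"
      unfolding transfer_def by (intro sum.cong refl) (auto simp: ind)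
    also have "\<dots> = indicator (cyl m w) y * g y" using i by (simp add: g_def mult_ac)
    finally show "indicator (cyl m w) y * g y
        = transfer m p (\<lambda>z. indicator (cyl m (i # w)) z * f z) y" by simp
  qed
  also have "\<dots> = r * (\<integral>x. indicator (cyl m (i # w)) x * f x \<partial>\<mu>)"
    by (rule eigenmeasure) (intro continuous_intros continuous_on_indicator_cyl Cons.prems(1))
  finally show ?case by simp
qed

lemma measure_cyl_eq:
  assumes "w \<in> words m"
  shows "measure \<mu> (cyl m w) = (\<integral>x. exp (birkhoff_sum p w x) \<partial>\<mu>) / r ^ length w"
proof -
  have "(\<integral>x. exp (birkhoff_sum p w x) * 1 \<partial>\<mu>) = r ^ length w * (\<integral>x. indicator (cyl m w) x * 1 \<partial>\<mu>)"
    by (rule integral_birkhoff_cyl[OF _ assms]) simp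
  moreover have "(\<integral>x. indicator (cyl m w) x \<partial>\<mu>) = measure \<mu> (cyl m w)"
  proof -
    have "cyl m w \<inter> space \<mu> = cyl m w" by (auto simp: space_measure cyl_def)
    then show ?thesis by simp
  qed
  ultimately show ?thesis using r_pos by (simp add: field_simps)
qed

end

locale perron_pair = e1: perron_data m b \<alpha> \<mu>1 p1 h1 r1 + e2: perron_data m b \<alpha> \<mu>2 p2 h2 r2
  for m b \<alpha> \<mu>1 p1 h1 r1 \<mu>2 p2 h2 r2 +
  fixes \<delta> :: real
  assumes close: "\<forall>x\<in>Sigma_space m. \<bar>p1 x - p2 x\<bar> \<le> \<delta>"
begin

lemma pot_le_12: "\<forall>x\<in>Sigma_space m. p1 x \<le> p2 x + \<delta>" using close by (auto simp: abs_le_iff)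
lemma pot_le_21: "\<forall>x\<in>Sigma_space m. p2 x \<le> p1 x + \<delta>" using close by (auto simp: abs_le_iff)

lemma eigenvalue_le_12: "r1 \<le> exp \<delta> * r2"
  by (rule e1.eigenvalue_le_perturbed[OF e2.cone_h e2.eigenfunction pot_le_12])

lemma eigenvalue_le_21: "r2 \<le> exp \<delta> * r1"
  by (rule e2.eigenvalue_le_perturbed[OF e1.cone_h e1.eigenfunction pot_le_21])

lemma eigenvalue_ratio_power: "(r2 / r1) ^ N \<le> exp (real N * \<delta>)" "(r1 / r2) ^ N \<le> exp (real N * \<delta>)"
proof -
  have "r2 / r1 \<le> exp \<delta>" using eigenvalue_le_21 e1.r_pos by (simp add: field_simps)
  then have "(r2 / r1) ^ N \<le> exp \<delta> ^ N" using e1.r_pos e2.r_pos by (intro power_mono) auto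
  then show "(r2 / r1) ^ N \<le> exp (real N * \<delta>)" by (simp add: exp_of_nat_mult)
  have "r1 / r2 \<le> exp \<delta>" using eigenvalue_le_12 e2.r_pos by (simp add: field_simps)
  then have "(r1 / r2) ^ N \<le> exp \<delta> ^ N" using e1.r_pos e2.r_pos by (intro power_mono) auto
  then show "(r1 / r2) ^ N \<le> exp (real N * \<delta>)" by (simp add: exp_of_nat_mult)
qed

lemma cone_normalized_iter:
  assumes F: "pos_cone m b \<alpha> F" shows "pos_cone m b \<alpha> (\<lambda>x. transfer_iter m p2 N F x / r2 ^ N)"
  using e1.cone_cmult[OF e1.cone_transfer_iter[OF e2.holder_p F], of "1 / r2 ^ N"] e2.r_pos by simp

lemma integral_le_normalized_iter:
  assumes F: "pos_cone m b \<alpha> F"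
  shows "(\<integral>x. F x \<partial>\<mu>1) \<le> exp (real N * \<delta>) ^ 2 * (\<integral>x. transfer_iter m p2 N F x / r2 ^ N \<partial>\<mu>1)"
proof -
  have Fnn: "\<forall>x\<in>Sigma_space m. 0 \<le> F x" using e1.cone_pos[OF F] by (auto simp: less_imp_le)
  have "(\<integral>x. transfer_iter m p1 N F x \<partial>\<mu>1) = r1 ^ N * (\<integral>x. F x \<partial>\<mu>1)"
    by (rule e1.integral_transfer_iter[OF e1.cone_continuous[OF F]])
  then have int_F: "(\<integral>x. F x \<partial>\<mu>1) = (\<integral>x. transfer_iter m p1 N F x \<partial>\<mu>1) / r1 ^ N" using e1.r_pos
    by (simp add: field_simps)
  have "(\<integral>x. transfer_iter m p1 N F x \<partial>\<mu>1)
      \<le> (\<integral>x. exp (real N * \<delta>) * r2 ^ N * (transfer_iter m p2 N F x / r2 ^ N) \<partial>\<mu>1)"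
  proof (rule e1.integral_mono_Sigma)
    show "integrable \<mu>1 (transfer_iter m p1 N F)"
      by (rule e1.integrable_cone[OF e1.cone_transfer_iter[OF e1.holder_p F]])
    show "integrable \<mu>1 (\<lambda>x. exp (real N * \<delta>) * r2 ^ N * (transfer_iter m p2 N F x / r2 ^ N))"
      by (rule e1.integrable_cone[OF e1.cone_cmult[OF cone_normalized_iter[OF F]]])
        (use e2.r_pos in simp)
    show "\<forall>x\<in>Sigma_space m. transfer_iter m p1 N F x
        \<le> exp (real N * \<delta>) * r2 ^ N * (transfer_iter m p2 N F x / r2 ^ N)"
      using transfer_iter_le_perturbed[OF pot_le_12 Fnn] e2.r_pos by simp
  qed
  also have "\<dots> = exp (real N * \<delta>) * r2 ^ N * (\<integral>x. transfer_iter m p2 N F x / r2 ^ N \<partial>\<mu>1)"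
    by (rule integral_mult_right_zero)
  finally have iter_le: "(\<integral>x. transfer_iter m p1 N F x \<partial>\<mu>1)
      \<le> exp (real N * \<delta>) * r2 ^ N * (\<integral>x. transfer_iter m p2 N F x / r2 ^ N \<partial>\<mu>1)" .
  have F_le: "(\<integral>x. F x \<partial>\<mu>1) \<le> exp (real N * \<delta>) * (r2 / r1) ^ N * (\<integral>x. transfer_iter m p2 N F x / r2 ^ N \<partial>\<mu>1)"
  proof -
    have "(\<integral>x. F x \<partial>\<mu>1) \<le> (exp (real N * \<delta>) * r2 ^ N * (\<integral>x. transfer_iter m p2 N F x / r2 ^ N \<partial>\<mu>1)) / r1 ^ N"
      unfolding int_F by (rule divide_right_mono[OF iter_le]) (use e1.r_pos in simp)
    also have "\<dots> = exp (real N * \<delta>) * (r2 / r1) ^ N * (\<integral>x. transfer_iter m p2 N F x / r2 ^ N \<partial>\<mu>1)"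
      by (simp add: power_divide divide_inverse mult_ac power_mult_distrib power_inverse)
    finally show ?thesis .
  qed
  have G_nonneg: "0 \<le> (\<integral>x. transfer_iter m p2 N F x / r2 ^ N \<partial>\<mu>1)"
    using e1.integral_cone_pos[OF cone_normalized_iter[OF F, of N]] by (rule less_imp_le)
  have "exp (real N * \<delta>) * (r2 / r1) ^ N * (\<integral>x. transfer_iter m p2 N F x / r2 ^ N \<partial>\<mu>1)
      \<le> exp (real N * \<delta>) * exp (real N * \<delta>) * (\<integral>x. transfer_iter m p2 N F x / r2 ^ N \<partial>\<mu>1)"
    using eigenvalue_ratio_power(1) G_nonneg by (intro mult_right_mono mult_left_mono) auto
  with F_le show ?thesis by (simp add: power2_eq_square)
qed

lemma normalized_iter_integral_le:
  assumes F: "pos_cone m b \<alpha> F"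
  shows "(\<integral>x. transfer_iter m p2 N F x / r2 ^ N \<partial>\<mu>1) \<le> exp (real N * \<delta>) ^ 2 * (\<integral>x. F x \<partial>\<mu>1)"
proof -
  have Fnn: "\<forall>x\<in>Sigma_space m. 0 \<le> F x" using e1.cone_pos[OF F] by (auto simp: less_imp_le)
  have "(\<integral>x. transfer_iter m p2 N F x / r2 ^ N \<partial>\<mu>1)
      \<le> (\<integral>x. exp (real N * \<delta>) / r2 ^ N * transfer_iter m p1 N F x \<partial>\<mu>1)"
  proof (rule e1.integral_mono_Sigma)
    show "integrable \<mu>1 (\<lambda>x. transfer_iter m p2 N F x / r2 ^ N)"
      by (rule e1.integrable_cone[OF cone_normalized_iter[OF F]])
    show "integrable \<mu>1 (\<lambda>x. exp (real N * \<delta>) / r2 ^ N * transfer_iter m p1 N F x)"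
      by (rule e1.integrable_cone[OF e1.cone_cmult[OF e1.cone_transfer_iter[OF e1.holder_p F]]])
        (use e2.r_pos in simp)
    show "\<forall>x\<in>Sigma_space m. transfer_iter m p2 N F x / r2 ^ N
        \<le> exp (real N * \<delta>) / r2 ^ N * transfer_iter m p1 N F x"
    proof
      fix x assume x: "x \<in> Sigma_space m"
      have "transfer_iter m p2 N F x \<le> exp (real N * \<delta>) * transfer_iter m p1 N F x"
        using transfer_iter_le_perturbed[OF pot_le_21 Fnn x] .
      then have "transfer_iter m p2 N F x / r2 ^ N
          \<le> (exp (real N * \<delta>) * transfer_iter m p1 N F x) / r2 ^ N"
        by (rule divide_right_mono) (use e2.r_pos in simp)
      then show "transfer_iter m p2 N F x / r2 ^ N
          \<le> exp (real N * \<delta>) / r2 ^ N * transfer_iter m p1 N F x"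
        by (simp only: times_divide_eq_left)
    qed
  qed
  also have "\<dots> = exp (real N * \<delta>) / r2 ^ N * (r1 ^ N * (\<integral>x. F x \<partial>\<mu>1))"
    using e1.integral_transfer_iter[OF e1.cone_continuous[OF F]] by simp
  also have "\<dots> = exp (real N * \<delta>) * (r1 / r2) ^ N * (\<integral>x. F x \<partial>\<mu>1)"
    by (simp add: power_divide divide_inverse mult_ac power_mult_distrib power_inverse)
  also have "\<dots> \<le> exp (real N * \<delta>) * exp (real N * \<delta>) * (\<integral>x. F x \<partial>\<mu>1)"
    using eigenvalue_ratio_power(2) e1.integral_cone_pos[OF F]
      by (intro mult_right_mono mult_left_mono) auto
  finally show ?thesis by (simp add: power2_eq_square)
qed

lemma integral_normalized_iter:
  assumes F: "pos_cone m b \<alpha> F"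
  shows "(\<integral>x. transfer_iter m p2 N F x / r2 ^ N \<partial>\<mu>2) = (\<integral>x. F x \<partial>\<mu>2)"
  using e2.integral_transfer_iter[OF e1.cone_continuous[OF F], of N] e2.r_pos by simp

lemma normalized_iter_ratio_bound:
  assumes F: "pos_cone m b \<alpha> F" and k: "exp (2 * e1.K k) \<le> 1 + e1.eps / 2"
  shows "\<forall>x\<in>Sigma_space m. \<forall>y\<in>Sigma_space m.
     (transfer_iter m p2 (j * k) F x / r2 ^ (j * k)) / h2 x \<le>
     e1.mixing_factor k j * ((transfer_iter m p2 (j * k) F y / r2 ^ (j * k)) / h2 y)"
proof (intro ballI)
  fix x y assume x: "x \<in> Sigma_space m" and y: "y \<in> Sigma_space m"
  have eigen: "transfer_iter m p2 (j * k) h2 z = r2 ^ (j * k) * h2 z" if "z \<in> Sigma_space m" for z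
    using transfer_iter_eigen[OF e2.eigenfunction that] .
  show "(transfer_iter m p2 (j * k) F x / r2 ^ (j * k)) / h2 x \<le>
     e1.mixing_factor k j * ((transfer_iter m p2 (j * k) F y / r2 ^ (j * k)) / h2 y)"
    unfolding divide_divide_eq_left eigen[OF x, symmetric] eigen[OF y, symmetric]
    by (rule e1.transfer_iter_ratio_bound[OF e2.holder_p F e2.cone_h k x y])
qed

text \<open>Both sides are compared with the normalising constant \<open>\<kappa>\<close> of the limit
  \<open>L\<^sub>2\<^sup>N 1 / r\<^sub>2\<^sup>N \<approx> \<kappa> h\<^sub>2\<close>: the \<open>\<mu>\<^sub>2\<close>-integral of \<open>L\<^sub>2\<^sup>N 1 / r\<^sub>2\<^sup>N\<close> is \<open>1\<close>, its
  \<open>\<mu>\<^sub>1\<close>-integral is close to \<open>\<mu>\<^sub>1(1) = 1\<close>.\<close>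
lemma integral_eigenfunction_le_perturbed:
  assumes k: "exp (2 * e1.K k) \<le> 1 + e1.eps / 2"
  shows "(\<integral>x. h2 x \<partial>\<mu>1) \<le> e1.mixing_factor k j ^ 2 * exp (real (j * k) * \<delta>) ^ 2"
proof -
  define Q where "Q = e1.mixing_factor k j"
  define N where "N = j * k"
  define G where "G x = transfer_iter m p2 N (\<lambda>_. 1) x / r2 ^ N" for x
  have Q1: "1 \<le> Q" unfolding Q_def by (rule e1.mixing_factor_ge_1)
  obtain y0 where y0: "y0 \<in> Sigma_space m" using e1.Sigma_space_nonempty by blast
  have one: "pos_cone m b \<alpha> (\<lambda>_. 1)" by (rule e1.cone_const) simp
  have G: "pos_cone m b \<alpha> G" unfolding G_def by (rule cone_normalized_iter[OF one])
  define \<kappa> where "\<kappa> = G y0 / h2 y0"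
  have \<kappa>: "0 < \<kappa>" unfolding \<kappa>_def using e1.cone_pos[OF G y0] e1.cone_pos[OF e2.cone_h y0] by simp
  have ratio: "\<forall>x\<in>Sigma_space m. \<forall>y\<in>Sigma_space m. G x / h2 x \<le> Q * (G y / h2 y)"
    using normalized_iter_ratio_bound[OF one k, of j] unfolding Q_def N_def G_def by simp
  define A where "A = (\<integral>x. h2 x \<partial>\<mu>1)"
  have A: "0 < A" unfolding A_def by (rule e1.integral_cone_pos[OF e2.cone_h])
  have "1 \<le> Q * \<kappa>"
  proof -
    have "(\<integral>x. G x \<partial>\<mu>2) = 1"
      unfolding G_def by (rule trans[OF integral_normalized_iter[OF one] e2.integral_const_prob])
    then show ?thesis
      using e2.integral_sandwich(1)[OF G e2.cone_h _ ratio y0] Q1 e2.normalized unfolding \<kappa>_def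
        by simp
  qed
  have "\<kappa> / Q * A \<le> exp (real N * \<delta>) ^ 2"
    using e1.integral_sandwich(2)[OF G e2.cone_h _ ratio y0] normalized_iter_integral_le[OF one, of N]
      prob_space.prob_space[OF e1.prob_space_mu] Q1
    unfolding \<kappa>_def G_def A_def by simp
  then have \<kappa>A: "\<kappa> * A \<le> Q * exp (real N * \<delta>) ^ 2" using Q1 by (simp add: field_simps)
  have "A \<le> (Q * \<kappa>) * A" using \<open>1 \<le> Q * \<kappa>\<close> A by simp
  also have "\<dots> = Q * (\<kappa> * A)" by simp
  also have "\<dots> \<le> Q * (Q * exp (real N * \<delta>) ^ 2)" using \<kappa>A Q1 by (intro mult_left_mono) auto
  finally show ?thesis unfolding A_def Q_def N_def by (simp add: power2_eq_square)
qed

lemma integral_le_perturbed: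
  assumes F: "pos_cone m b \<alpha> F" and k: "exp (2 * e1.K k) \<le> 1 + e1.eps / 2"
  shows "(\<integral>x. F x \<partial>\<mu>1) \<le> exp (real (j * k) * \<delta>) ^ 4 * e1.mixing_factor k j ^ 4 * (\<integral>x. F x \<partial>\<mu>2)"
proof -
  define Q where "Q = e1.mixing_factor k j"
  define N where "N = j * k"
  define X where "X = exp (real N * \<delta>)"
  define G where "G x = transfer_iter m p2 N F x / r2 ^ N" for x
  have Q1: "1 \<le> Q" unfolding Q_def by (rule e1.mixing_factor_ge_1)
  have X: "0 < X" unfolding X_def by simp
  obtain y0 where y0: "y0 \<in> Sigma_space m" using e1.Sigma_space_nonempty by blast
  have G: "pos_cone m b \<alpha> G" unfolding G_def by (rule cone_normalized_iter[OF F])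
  define \<kappa> where "\<kappa> = G y0 / h2 y0"
  have \<kappa>: "0 < \<kappa>" unfolding \<kappa>_def using e1.cone_pos[OF G y0] e1.cone_pos[OF e2.cone_h y0] by simp
  have ratio: "\<forall>x\<in>Sigma_space m. \<forall>y\<in>Sigma_space m. G x / h2 x \<le> Q * (G y / h2 y)"
    using normalized_iter_ratio_bound[OF F k, of j] unfolding Q_def N_def G_def by simp
  have h2_int: "(\<integral>x. h2 x \<partial>\<mu>1) \<le> Q ^ 2 * X ^ 2"
    using integral_eigenfunction_le_perturbed[OF k, of j] unfolding Q_def X_def N_def .
  have "\<kappa> / Q \<le> (\<integral>x. F x \<partial>\<mu>2)"
    using e2.integral_sandwich(2)[OF G e2.cone_h _ ratio y0] Q1 e2.normalized
      integral_normalized_iter[OF F, of N]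
    unfolding \<kappa>_def G_def by simp
  then have \<kappa>_le: "\<kappa> \<le> Q * (\<integral>x. F x \<partial>\<mu>2)" using Q1 by (simp add: pos_divide_le_eq mult.commute)
  have "(\<integral>x. F x \<partial>\<mu>1) \<le> X ^ 2 * (\<integral>x. G x \<partial>\<mu>1)"
    using integral_le_normalized_iter[OF F, of N] unfolding X_def G_def .
  also have "\<dots> \<le> X ^ 2 * (Q * \<kappa> * (\<integral>x. h2 x \<partial>\<mu>1))"
    using e1.integral_sandwich(1)[OF G e2.cone_h _ ratio y0] Q1 X unfolding \<kappa>_def
    by (intro mult_left_mono) auto
  also have "\<dots> \<le> X ^ 2 * (Q * (Q * (\<integral>x. F x \<partial>\<mu>2)) * (Q ^ 2 * X ^ 2))"
    using \<kappa>_le h2_int Q1 \<kappa> X e1.integral_cone_pos[OF e2.cone_h]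
    by (intro mult_left_mono mult_mono) auto
  also have "\<dots> = X ^ 4 * Q ^ 4 * (\<integral>x. F x \<partial>\<mu>2)"
    by (simp add: mult_ac eval_nat_numeral)
  finally show ?thesis unfolding X_def Q_def N_def .
qed

lemma eigenfunction_le_perturbed:
  assumes k: "exp (2 * e1.K k) \<le> 1 + e1.eps / 2"
    and Phi: "(\<integral>x. h1 x \<partial>\<mu>2) \<le> \<Phi>" and x: "x \<in> Sigma_space m"
  shows "h1 x \<le> exp (real (j * k) * \<delta>) ^ 2 * e1.mixing_factor k j * \<Phi> * h2 x"
proof -
  define Q where "Q = e1.mixing_factor k j"
  define N where "N = j * k"
  define X where "X = exp (real N * \<delta>)"
  have Q1: "1 \<le> Q" unfolding Q_def by (rule e1.mixing_factor_ge_1)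
  have X: "0 < X" unfolding X_def by simp
  define G where "G = transfer_iter m p2 N h1 x / r2 ^ N"
  have h1e: "transfer_iter m p1 N h1 x = r1 ^ N * h1 x"
    by (rule transfer_iter_eigen[OF e1.eigenfunction x])
  have hnn: "\<forall>x\<in>Sigma_space m. 0 \<le> h1 x" using e1.cone_pos[OF e1.cone_h] by (auto simp: less_imp_le)
  have iter_le: "transfer_iter m p1 N h1 x \<le> X * transfer_iter m p2 N h1 x" unfolding X_def
    by (rule transfer_iter_le_perturbed[OF pot_le_12 hnn x])
  have G_nonneg: "0 \<le> G" unfolding G_def using e1.cone_pos[OF cone_normalized_iter[OF e1.cone_h, of N] x]
    by simp
  have "h1 x = transfer_iter m p1 N h1 x / r1 ^ N" using h1e e1.r_pos by simp
  also have "\<dots> \<le> X * transfer_iter m p2 N h1 x / r1 ^ N" using iter_le e1.r_pos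
    by (intro divide_right_mono) auto
  also have "\<dots> = X * (r2 / r1) ^ N * G" unfolding G_def using e2.r_pos e1.r_pos
    by (simp add: power_divide field_simps)
  also have "\<dots> \<le> X * X * G" using eigenvalue_ratio_power(1)[of N] X G_nonneg unfolding X_def
    by (intro mult_right_mono mult_left_mono) auto
  finally have h1_le: "h1 x \<le> X * X * G" .
  have ratio: "\<forall>x\<in>Sigma_space m. \<forall>y\<in>Sigma_space m. (transfer_iter m p2 N h1 x / r2 ^ N) / h2 x
      \<le> Q * ((transfer_iter m p2 N h1 y / r2 ^ N) / h2 y)"
    using normalized_iter_ratio_bound[OF e1.cone_h k, of j] unfolding Q_def N_def by simp
  have "(G / h2 x) / Q * 1 \<le> (\<integral>y. transfer_iter m p2 N h1 y / r2 ^ N \<partial>\<mu>2)"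
    using e2.integral_sandwich(2)[OF cone_normalized_iter[OF e1.cone_h] e2.cone_h _ ratio x] Q1 e2.normalized unfolding G_def by simp
  also have "\<dots> = (\<integral>y. h1 y \<partial>\<mu>2)" by (rule integral_normalized_iter[OF e1.cone_h])
  finally have "(G / h2 x) / Q \<le> \<Phi>" using Phi by simp
  then have G_le: "G \<le> Q * \<Phi> * h2 x" using Q1 e1.cone_pos[OF e2.cone_h x] by (simp add: field_simps)
  have "X * X * G \<le> X * X * (Q * \<Phi> * h2 x)" using G_le X by (intro mult_left_mono) auto
  with h1_le have "h1 x \<le> X * X * (Q * \<Phi> * h2 x)" by (rule order_trans)
  then show ?thesis unfolding X_def Q_def N_def by (simp add: power2_eq_square mult_ac)
qed

lemma measure_cyl_le_perturbed:
  assumes Psi: "\<And>F. pos_cone m b \<alpha> F \<Longrightarrow> (\<integral>x. F x \<partial>\<mu>1) \<le> \<Psi> * (\<integral>x. F x \<partial>\<mu>2)"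
    and Psi0: "0 \<le> \<Psi>" and w: "w \<in> words m"
  shows "measure \<mu>1 (cyl m w) \<le> exp (real (length w) * \<delta>) ^ 2 * \<Psi> * measure \<mu>2 (cyl m w)"
proof -
  define n where "n = length w"
  define X where "X = exp (real n * \<delta>)"
  have X: "0 < X" unfolding X_def by simp
  have F2: "pos_cone m b \<alpha> (\<lambda>x. exp (birkhoff_sum p2 w x))"
    by (rule e1.cone_exp_birkhoff_sum[OF e2.holder_p w])
  have F1: "pos_cone m b \<alpha> (\<lambda>x. exp (birkhoff_sum p1 w x))"
    by (rule e1.cone_exp_birkhoff_sum[OF e1.holder_p w])
  have cyl1: "measure \<mu>1 (cyl m w) = (\<integral>x. exp (birkhoff_sum p1 w x) \<partial>\<mu>1) / r1 ^ n"
    unfolding n_def by (rule e1.measure_cyl_eq[OF w])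
  have cyl2: "measure \<mu>2 (cyl m w) = (\<integral>x. exp (birkhoff_sum p2 w x) \<partial>\<mu>2) / r2 ^ n"
    unfolding n_def by (rule e2.measure_cyl_eq[OF w])
  have "(\<integral>x. exp (birkhoff_sum p1 w x) \<partial>\<mu>1) \<le> (\<integral>x. X * exp (birkhoff_sum p2 w x) \<partial>\<mu>1)"
  proof (rule e1.integral_mono_Sigma)
    show "integrable \<mu>1 (\<lambda>x. exp (birkhoff_sum p1 w x))" by (rule e1.integrable_cone[OF F1])
    show "integrable \<mu>1 (\<lambda>x. X * exp (birkhoff_sum p2 w x))"
      by (rule e1.integrable_cone[OF e1.cone_cmult[OF F2 X]])
    show "\<forall>x\<in>Sigma_space m. exp (birkhoff_sum p1 w x) \<le> X * exp (birkhoff_sum p2 w x)"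
    proof
      fix x assume x: "x \<in> Sigma_space m"
      have "birkhoff_sum p1 w x \<le> birkhoff_sum p2 w x + real n * \<delta>" unfolding n_def
        by (rule birkhoff_sum_le_perturbed[OF pot_le_12 x w])
      then show "exp (birkhoff_sum p1 w x) \<le> X * exp (birkhoff_sum p2 w x)" unfolding X_def
        by (simp add: exp_add[symmetric] add.commute)
    qed
  qed
  also have "\<dots> = X * (\<integral>x. exp (birkhoff_sum p2 w x) \<partial>\<mu>1)" by simp
  also have "\<dots> \<le> X * (\<Psi> * (\<integral>x. exp (birkhoff_sum p2 w x) \<partial>\<mu>2))" using Psi[OF F2] X
    by (intro mult_left_mono) auto
  also have "\<dots> = X * \<Psi> * r2 ^ n * measure \<mu>2 (cyl m w)" using cyl2 e2.r_pos by simp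
  finally have int_le: "(\<integral>x. exp (birkhoff_sum p1 w x) \<partial>\<mu>1) \<le> X * \<Psi> * r2 ^ n * measure \<mu>2 (cyl m w)" .
  have mp: "0 \<le> measure \<mu>2 (cyl m w)" by simp
  have "measure \<mu>1 (cyl m w) \<le> X * \<Psi> * r2 ^ n * measure \<mu>2 (cyl m w) / r1 ^ n"
    unfolding cyl1 using int_le e1.r_pos by (intro divide_right_mono) auto
  also have "\<dots> = X * \<Psi> * (r2 / r1) ^ n * measure \<mu>2 (cyl m w)"
    by (simp add: power_divide divide_inverse mult_ac power_mult_distrib power_inverse)
  also have "\<dots> \<le> X * \<Psi> * X * measure \<mu>2 (cyl m w)"
    using eigenvalue_ratio_power(1)[of n] X Psi0 mp unfolding X_def
      by (intro mult_right_mono mult_left_mono) auto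
  finally show ?thesis unfolding X_def n_def by (simp add: power2_eq_square mult_ac)
qed

lemma ratio_bounds:
  assumes k: "exp (2 * e1.K k) \<le> 1 + e1.eps / 2" and E: "e1.mixing_factor k k \<le> exp E"
  defines "B \<equiv> 2 * \<delta> + 6 * real (k * k) * \<delta> + 5 * E"
  shows "x \<in> Sigma_space m \<Longrightarrow> h1 x / h2 x \<le> exp B"
    and "w \<in> words m \<Longrightarrow> measure \<mu>1 (cyl m w) / measure \<mu>2 (cyl m w) \<le> exp (B * real (length w))"
proof -
  interpret swapped: perron_pair m b \<alpha> \<mu>2 p2 h2 r2 \<mu>1 p1 h1 r1 \<delta>
    by unfold_locales (use close in \<open>auto simp: abs_minus_commute\<close>)
  define Q where "Q = e1.mixing_factor k k"
  define X where "X = exp (real (k * k) * \<delta>)"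
  have Q1: "1 \<le> Q" unfolding Q_def by (rule e1.mixing_factor_ge_1)
  have E0: "0 \<le> E" using order_trans[OF Q1[unfolded Q_def] E] by simp
  have \<delta>0: "0 \<le> \<delta>"
    using close e1.Sigma_space_nonempty by (metis abs_ge_zero order_trans)
  have powers: "X ^ i * Q ^ j \<le> exp (real i * (real (k * k) * \<delta>) + real j * E)" for i j
  proof -
    have "Q ^ j \<le> exp E ^ j" using Q1 E unfolding Q_def by (intro power_mono) auto
    then have "X ^ i * Q ^ j \<le> X ^ i * exp E ^ j" unfolding X_def by (intro mult_left_mono) auto
    then show ?thesis unfolding X_def by (simp add: exp_add exp_of_nat_mult[symmetric])
  qed
  have h1_int: "(\<integral>x. h1 x \<partial>\<mu>2) \<le> X ^ 4 * Q ^ 4"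
    using swapped.integral_le_perturbed[OF e1.cone_h k, of k] e1.normalized unfolding X_def Q_def
      by simp
  show "h1 x / h2 x \<le> exp B" if x: "x \<in> Sigma_space m"
  proof -
    have "h1 x \<le> X ^ 2 * Q * (X ^ 4 * Q ^ 4) * h2 x"
      using eigenfunction_le_perturbed[OF k h1_int x, of k] unfolding X_def Q_def .
    then have "h1 x / h2 x \<le> X ^ 2 * Q * (X ^ 4 * Q ^ 4)"
      by (simp only: pos_divide_le_eq[OF e1.cone_pos[OF e2.cone_h x]])
    also have "\<dots> \<le> exp (2 * (real (k * k) * \<delta>) + E) * exp (4 * (real (k * k) * \<delta>) + 4 * E)"
      using powers[of 2 1] powers[of 4 4] Q1 unfolding X_def by (intro mult_mono) simp_all
    also have "\<dots> \<le> exp B" using \<delta>0 unfolding B_def exp_add[symmetric] by simp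
    finally show ?thesis .
  qed
  show "measure \<mu>1 (cyl m w) / measure \<mu>2 (cyl m w) \<le> exp (B * real (length w))" if w: "w \<in> words m"
  proof (cases "w = []")
    case True
    have "cyl m w = space \<mu>1" "cyl m w = space \<mu>2"
      using True e1.space_measure e2.space_measure by (auto simp: cyl_def)
    then show ?thesis
      using True prob_space.prob_space[OF e1.prob_space_mu] prob_space.prob_space[OF e2.prob_space_mu] by simp
  next
    case False
    then have n1: "1 \<le> real (length w)" by (cases w) auto
    have XQ: "0 \<le> X ^ 4 * Q ^ 4" using Q1 unfolding X_def by simp
    moreover have "(\<integral>x. F x \<partial>\<mu>1) \<le> X ^ 4 * Q ^ 4 * (\<integral>x. F x \<partial>\<mu>2)" if "pos_cone m b \<alpha> F" for F
      unfolding X_def Q_def by (rule integral_le_perturbed[OF that k])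
    ultimately have cyl_le:
      "measure \<mu>1 (cyl m w) \<le> exp (real (length w) * \<delta>) ^ 2 * (X ^ 4 * Q ^ 4) * measure \<mu>2 (cyl m w)"
      by (intro measure_cyl_le_perturbed[OF _ _ w])
    have "measure \<mu>1 (cyl m w) / measure \<mu>2 (cyl m w)
        \<le> exp (real (length w) * \<delta>) ^ 2 * (X ^ 4 * Q ^ 4)"
    proof (cases "measure \<mu>2 (cyl m w) = 0")
      case True
      then show ?thesis using XQ by simp
    next
      case False
      then have "0 < measure \<mu>2 (cyl m w)" using measure_nonneg[of \<mu>2 "cyl m w"] by linarith
      then show ?thesis using cyl_le by (simp only: pos_divide_le_eq)
    qed
    also have "\<dots> = exp (2 * (real (length w) * \<delta>)) * (X ^ 4 * Q ^ 4)"
      using exp_of_nat_mult[of 2 "real (length w) * \<delta>"] by simp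
    also have "\<dots> \<le> exp (2 * (real (length w) * \<delta>)) * exp (4 * (real (k * k) * \<delta>) + 4 * E)"
      using powers[of 4 4] by (intro mult_left_mono) simp_all
    also have "\<dots> \<le> exp (B * real (length w))"
    proof -
      define a where "a = 6 * real (k * k) * \<delta> + 5 * E"
      have "0 \<le> real (k * k) * \<delta>" using \<delta>0 by simp
      then have a: "4 * (real (k * k) * \<delta>) + 4 * E \<le> a" "0 \<le> a" using E0 unfolding a_def
        by linarith+
      have "a \<le> a * real (length w)" using n1 a(2) by (simp add: mult_le_cancel_left1)
      with a(1) have "2 * (real (length w) * \<delta>) + (4 * (real (k * k) * \<delta>) + 4 * E)
          \<le> 2 * (real (length w) * \<delta>) + a * real (length w)" by linarith
      also have "\<dots> = B * real (length w)" unfolding B_def a_def by (simp add: algebra_simps)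
      finally have "2 * (real (length w) * \<delta>) + (4 * (real (k * k) * \<delta>) + 4 * E)
          \<le> B * real (length w)" .
      then show ?thesis by (simp add: exp_add[symmetric])
    qed
    finally show ?thesis .
  qed
qed

end

lemma ln_sq_le_powr:
  fixes d t :: real
  assumes d: "0 < d" "d \<le> 1" and t: "0 < t"
  shows "(ln (1 / d)) ^ 2 \<le> (4 / t ^ 2) * d powr (- t)"
proof -
  have ln_nonneg: "0 \<le> ln (1 / d)" using d by simp
  have "ln ((1 / d) powr (t / 2)) = (t / 2) * ln (1 / d)" using d by (simp add: ln_powr)
  moreover have "ln ((1 / d) powr (t / 2)) \<le> (1 / d) powr (t / 2)"
    using ln_le_minus_one[of "(1 / d) powr (t / 2)"] d by simp
  ultimately have "(t / 2) * ln (1 / d) \<le> (1 / d) powr (t / 2)" by simp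
  then have ln_le: "ln (1 / d) \<le> (2 / t) * (1 / d) powr (t / 2)" using t by (simp add: field_simps)
  have "(ln (1 / d)) ^ 2 \<le> ((2 / t) * (1 / d) powr (t / 2)) ^ 2"
    using ln_le ln_nonneg by (rule power_mono)
  also have "\<dots> = (4 / t ^ 2) * ((1 / d) powr (t / 2)) ^ 2"
    by (simp add: power_mult_distrib power_divide)
  also have "((1 / d) powr (t / 2)) ^ 2 = (1 / d) powr t"
    using d by (simp add: powr_realpow[symmetric] powr_powr)
  also have "(1 / d) powr t = d powr (- t)" using d by (simp add: powr_minus_divide powr_divide)
  finally show ?thesis .
qed

lemma ln_sq_powr_le:
  fixes d t \<theta> \<theta>' :: real
  assumes d: "0 < d" and t: "t = \<theta> - \<theta>'" "0 < t"
  shows "(ln (max 1 (1 / d))) ^ 2 * d powr \<theta> \<le> (4 / t ^ 2) * d powr \<theta>'"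
proof (cases "d \<le> 1")
  case True
  then have "max 1 (1 / d) = 1 / d" using d by simp
  then have "(ln (max 1 (1 / d))) ^ 2 * d powr \<theta> \<le> ((4 / t ^ 2) * d powr (- t)) * d powr \<theta>"
    using ln_sq_le_powr[OF d True t(2)] by (intro mult_right_mono) auto
  also have "\<dots> = (4 / t ^ 2) * d powr \<theta>'" using t by (simp add: powr_add[symmetric])
  finally show ?thesis .
next
  case False
  then have "max 1 (1 / d) = 1" using d by (simp add: field_simps)
  then show ?thesis using t by simp
qed

lemma power_le_powr_if_log_le:
  fixes \<beta> \<theta>' d :: real
  assumes b: "0 < \<beta>" "\<beta> < 1" and th: "0 < \<theta>'" and d: "0 < d" and s: "\<theta>' / (- ln \<beta>) * ln (max 1 (1 / d)) \<le> real s"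
  shows "\<beta> ^ s \<le> d powr \<theta>'"
proof -
  have lb: "ln \<beta> < 0" using b by simp
  define M where "M = max 1 (1 / d)"
  have M: "1 \<le> M" "0 < M" unfolding M_def by auto
  have "\<beta> ^ s = exp (real s * ln \<beta>)" using b by (simp add: exp_of_nat_mult)
  also have "\<dots> \<le> exp ((\<theta>' / (- ln \<beta>) * ln M) * ln \<beta>)"
    using s lb unfolding M_def by (intro exp_mono mult_right_mono_neg) auto
  also have "(\<theta>' / (- ln \<beta>) * ln M) * ln \<beta> = - \<theta>' * ln M" using lb by (simp add: field_simps)
  also have "exp (- \<theta>' * ln M) = M powr (- \<theta>')" using M by (simp add: powr_def)
  also have "\<dots> \<le> d powr \<theta>'"
  proof (cases "d \<le> 1")
    case True
    then have "M = 1 / d" using d by (simp add: M_def)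
    then show ?thesis using d by (simp add: powr_minus_divide powr_divide)
  next
    case False
    then have "M = 1" using d by (simp add: M_def field_simps)
    moreover have "1 \<le> d powr \<theta>'" using False th by (simp add: ge_one_powr_ge_zero)
    ultimately show ?thesis by simp
  qed
  finally show ?thesis .
qed

lemma block_length_choice:
  fixes \<beta> \<theta> \<theta>' D :: real and k0 :: nat
  assumes \<beta>: "0 < \<beta>" "\<beta> < 1" and \<theta>': "0 < \<theta>'" "\<theta>' < \<theta>" and D: "0 < D"
  obtains C where "\<And>d. 0 < d \<Longrightarrow> d \<le> D \<Longrightarrow>
    \<exists>k\<ge>k0. real (k * k) * d powr \<theta> \<le> C * d powr \<theta>' \<and> \<beta> ^ k \<le> d powr \<theta>'"
proof -
  define t where "t = \<theta> - \<theta>'"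
  define A where "A = \<theta>' / (- ln \<beta>)"
  have t: "0 < t" unfolding t_def using \<theta>' by simp
  have A: "0 < A" unfolding A_def using \<beta> \<theta>' by (simp add: divide_pos_neg)
  define C where "C = 2 * (real k0 + 1) ^ 2 * D powr t + 2 * A ^ 2 * (4 / t ^ 2)"
  have "\<exists>k\<ge>k0. real (k * k) * d powr \<theta> \<le> C * d powr \<theta>' \<and> \<beta> ^ k \<le> d powr \<theta>'"
    if d: "0 < d" "d \<le> D" for d
  proof -
    define L where "L = ln (max 1 (1 / d))"
    define s where "s = nat \<lceil>A * L\<rceil>"
    have L: "0 \<le> L" unfolding L_def by simp
    have "0 \<le> A * L" using A L by simp
    then have "real s = of_int \<lceil>A * L\<rceil>" unfolding s_def by simp
    then have s: "A * L \<le> real s" "real s \<le> A * L + 1" by linarith+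
    have "\<beta> ^ (k0 + s) \<le> \<beta> ^ s" using \<beta> by (intro power_decreasing) auto
    also have "\<dots> \<le> d powr \<theta>'"
      by (rule power_le_powr_if_log_le[OF \<beta> \<theta>'(1) d(1)]) (use s(1) in \<open>simp add: A_def L_def\<close>)
    finally have power: "\<beta> ^ (k0 + s) \<le> d powr \<theta>'" .
    have d\<theta>: "d powr \<theta> = d powr t * d powr \<theta>'" unfolding t_def by (simp add: powr_add[symmetric])
    have "real ((k0 + s) * (k0 + s)) \<le> ((real k0 + 1) + A * L) ^ 2"
      using s(2) by (simp add: power2_eq_square[symmetric])
    also have "\<dots> \<le> 2 * (real k0 + 1) ^ 2 + 2 * A ^ 2 * L ^ 2"
      using zero_le_power2[of "(real k0 + 1) - A * L"] by (simp add: power2_eq_square algebra_simps)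
    finally have "real ((k0 + s) * (k0 + s)) * d powr \<theta>
        \<le> 2 * (real k0 + 1) ^ 2 * d powr \<theta> + 2 * A ^ 2 * (L ^ 2 * d powr \<theta>)"
      by (rule mult_right_mono[THEN order_trans]) (simp_all add: algebra_simps)
    also have "\<dots> \<le> 2 * (real k0 + 1) ^ 2 * (D powr t * d powr \<theta>') + 2 * A ^ 2 * ((4 / t ^ 2) * d powr \<theta>')"
      using powr_mono2[of t d D] d t ln_sq_powr_le[OF d(1) t_def t] unfolding d\<theta> L_def
      by (intro add_mono mult_left_mono mult_right_mono) auto
    also have "\<dots> = C * d powr \<theta>'" unfolding C_def by (simp add: algebra_simps)
    finally show ?thesis using power by (intro exI[of _ "k0 + s"]) auto
  qed
  then show thesis by (rule that)
qed

locale potential_family =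
  fixes m :: nat and U :: "'a::metric_space set" and phi :: "'a \<Rightarrow> (nat \<Rightarrow> nat) \<Rightarrow> real"
    and \<alpha> b c \<theta> :: real and h :: "'a \<Rightarrow> (nat \<Rightarrow> nat) \<Rightarrow> real" and \<nu> :: "'a \<Rightarrow> (nat \<Rightarrow> nat) measure"
  assumes U_bounded: "bounded U"
    and alpha_pos: "0 < \<alpha>" and alpha_lt_1: "\<alpha> < 1" and b_pos: "0 < b" and c_nonneg: "0 \<le> c"
    and holder_phi: "\<And>l. l \<in> U \<Longrightarrow> holder_potential m b \<alpha> (phi l)"
    and dist_phi: "\<And>l l' x. l \<in> U \<Longrightarrow> l' \<in> U \<Longrightarrow> x \<in> Sigma_space m \<Longrightarrow>
      \<bar>phi l x - phi l' x\<bar> \<le> c * dist l l' powr \<theta>"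
    and h_Lambda: "\<And>l. l \<in> U \<Longrightarrow> h l \<in> Lambda_cone m b \<alpha>"
    and h_eig: "\<And>l x. l \<in> U \<Longrightarrow> x \<in> Sigma_space m \<Longrightarrow>
      transfer m (phi l) (h l) x = exp (pressure m (phi l)) * h l x"
    and \<nu>_prob: "\<And>l. l \<in> U \<Longrightarrow> prob_space (\<nu> l)"
    and \<nu>_sets: "\<And>l. l \<in> U \<Longrightarrow> sets (\<nu> l) = sets (Sigma_M m)"
    and \<nu>_eig: "\<And>l f. l \<in> U \<Longrightarrow> continuous_on (Sigma_space m) f \<Longrightarrow>
      (\<integral>x. transfer m (phi l) f x \<partial>\<nu> l) = exp (pressure m (phi l)) * (\<integral>x. f x \<partial>\<nu> l)"
    and h_norm: "\<And>l. l \<in> U \<Longrightarrow> (\<integral>x. h l x \<partial>\<nu> l) = 1"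
begin

lemma perron_data:
  assumes l: "l \<in> U"
  shows "perron_data m b \<alpha> (\<nu> l) (phi l) (h l) (exp (pressure m (phi l)))"
proof -
  have space: "space (\<nu> l) = Sigma_space m"
    using sets_eq_imp_space_eq[OF \<nu>_sets[OF l]] by (simp add: space_Sigma_M)
  then obtain x0 where "x0 \<in> Sigma_space m" using prob_space.not_empty[OF \<nu>_prob[OF l]] by auto
  then have m: "1 \<le> m" by (auto simp: Sigma_space_def)
  interpret cone_setting m b \<alpha> using m alpha_pos alpha_lt_1 b_pos by unfold_locales
  have "\<exists>x\<in>S. 0 < h l x"
  proof (rule ccontr)
    assume "\<not> (\<exists>x\<in>S. 0 < h l x)"
    then have "\<forall>x\<in>S. h l x = 0" using h_Lambda[OF l] by (force simp: Lambda_cone_def)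
    then have "(\<integral>x. h l x \<partial>\<nu> l) = (\<integral>x. 0 \<partial>\<nu> l)"
      by (intro Bochner_Integration.integral_cong) (auto simp: space)
    with h_norm[OF l] show False by simp
  qed
  then have h_cone: "pos_cone m b \<alpha> (h l)" using Lambda_cone_imp_cone[OF h_Lambda[OF l]] by blast
  show ?thesis
  proof (intro perron_data.intro cone_measure.intro perron_data_axioms.intro cone_measure_axioms.intro)
    show "\<forall>x\<in>S. transfer m (phi l) (h l) x = exp (pressure m (phi l)) * h l x" using h_eig[OF l]
      by blast
  qed (use cone_setting_axioms \<nu>_prob[OF l] \<nu>_sets[OF l] holder_phi[OF l] h_cone \<nu>_eig[OF l] h_norm[OF l] in auto)
qed

lemma perron_pair:
  assumes "l \<in> U" "l' \<in> U"
  shows "perron_pair m b \<alpha> (\<nu> l) (phi l) (h l) (exp (pressure m (phi l)))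
    (\<nu> l') (phi l') (h l') (exp (pressure m (phi l'))) (c * dist l l' powr \<theta>)"
  using assms dist_phi by (intro perron_pair.intro perron_pair_axioms.intro perron_data) auto

theorem holder_dependence:
  assumes \<theta>': "0 < \<theta>'" "\<theta>' < \<theta>"
  shows "\<exists>C>0. \<forall>l\<in>U. \<forall>l'\<in>U.
    (\<forall>x\<in>Sigma_space m. h l x / h l' x \<le> exp (C * dist l l' powr \<theta>')) \<and>
    (\<forall>w\<in>words m. measure (\<nu> l) (cyl m w) / measure (\<nu> l') (cyl m w)
       \<le> exp (C * dist l l' powr \<theta>' * real (length w)))"
proof (cases "U = {}")
  case False
  then obtain l0 where "l0 \<in> U" by blast
  then interpret perron_data m b \<alpha> "\<nu> l0" "phi l0" "h l0" "exp (pressure m (phi l0))"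
    by (rule perron_data)
  obtain k0 where k0: "\<And>k. k0 \<le> k \<Longrightarrow> exp (2 * K k) \<le> 1 + eps / 2"
    using block_length_exists by blast
  obtain \<beta> CE where \<beta>: "0 < \<beta>" "\<beta> < 1" and CE: "0 \<le> CE" "\<And>k. mixing_factor k k \<le> exp (CE * \<beta> ^ k)"
    using mixing_factor_le_exp by blast
  obtain D0 where D0: "\<forall>l\<in>U. \<forall>l'\<in>U. dist l l' \<le> D0" using U_bounded bounded_two_points by blast
  define D where "D = max 1 D0"
  have D: "0 < D" "\<And>l l'. l \<in> U \<Longrightarrow> l' \<in> U \<Longrightarrow> dist l l' \<le> D"
    unfolding D_def using D0 by (auto intro: max.coboundedI2)
  obtain Ck where Ck: "\<And>d. 0 < d \<Longrightarrow> d \<le> D \<Longrightarrow>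
      \<exists>k\<ge>k0. real (k * k) * d powr \<theta> \<le> Ck * d powr \<theta>' \<and> \<beta> ^ k \<le> d powr \<theta>'"
    using block_length_choice[OF \<beta> \<theta>' D(1)] by blast
  define C where "C = max 1 (2 * c * D powr (\<theta> - \<theta>') + 6 * c * Ck + 5 * CE)"
  have "(\<forall>x\<in>Sigma_space m. h l x / h l' x \<le> exp (C * dist l l' powr \<theta>')) \<and>
    (\<forall>w\<in>words m. measure (\<nu> l) (cyl m w) / measure (\<nu> l') (cyl m w)
       \<le> exp (C * dist l l' powr \<theta>' * real (length w)))" if l: "l \<in> U" "l' \<in> U" for l l'
  proof (cases "l = l'")
    case False
    define d where "d = dist l l'"
    have d: "0 < d" "d \<le> D" using False D(2)[OF l] unfolding d_def by auto
    then obtain k where k: "k0 \<le> k" "real (k * k) * d powr \<theta> \<le> Ck * d powr \<theta>'" "\<beta> ^ k \<le> d powr \<theta>'"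
      using Ck by blast
    interpret perron_pair m b \<alpha> "\<nu> l" "phi l" "h l" "exp (pressure m (phi l))"
      "\<nu> l'" "phi l'" "h l'" "exp (pressure m (phi l'))" "c * d powr \<theta>"
      unfolding d_def by (rule perron_pair[OF l])
    let ?B = "2 * (c * d powr \<theta>) + 6 * real (k * k) * (c * d powr \<theta>) + 5 * (CE * \<beta> ^ k)"
    have B_le: "?B \<le> C * d powr \<theta>'"
    proof -
      have "d powr \<theta> = d powr (\<theta> - \<theta>') * d powr \<theta>'" by (simp add: powr_add[symmetric])
      also have "\<dots> \<le> D powr (\<theta> - \<theta>') * d powr \<theta>'" using d \<theta>'
        by (intro mult_right_mono powr_mono2) auto
      finally have "2 * (c * d powr \<theta>) \<le> (2 * c * D powr (\<theta> - \<theta>')) * d powr \<theta>'"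
        using c_nonneg by (simp add: mult_left_mono mult.assoc)
      moreover have "6 * real (k * k) * (c * d powr \<theta>) \<le> (6 * c * Ck) * d powr \<theta>'"
        using mult_left_mono[OF k(2), of "6 * c"] c_nonneg by (simp add: mult_ac)
      moreover have "5 * (CE * \<beta> ^ k) \<le> (5 * CE) * d powr \<theta>'"
        using mult_left_mono[OF k(3), of "5 * CE"] CE(1) by (simp add: mult_ac)
      moreover have "(2 * c * D powr (\<theta> - \<theta>') + 6 * c * Ck + 5 * CE) * d powr \<theta>' \<le> C * d powr \<theta>'"
        unfolding C_def by (rule mult_right_mono) simp_all
      ultimately show ?thesis unfolding distrib_right by linarith
    qed
    show ?thesis
    proof (intro conjI ballI)
      fix x assume "x \<in> Sigma_space m"
      then have "h l x / h l' x \<le> exp ?B" by (rule ratio_bounds(1)[OF k0[OF k(1)] CE(2)])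
      also have "\<dots> \<le> exp (C * d powr \<theta>')" using B_le by simp
      finally show "h l x / h l' x \<le> exp (C * dist l l' powr \<theta>')" unfolding d_def .
    next
      fix w assume "w \<in> words m"
      then have "measure (\<nu> l) (cyl m w) / measure (\<nu> l') (cyl m w) \<le> exp (?B * real (length w))"
        by (rule ratio_bounds(2)[OF k0[OF k(1)] CE(2)])
      also have "\<dots> \<le> exp (C * d powr \<theta>' * real (length w))"
        using mult_right_mono[OF B_le, of "real (length w)"]
          by (simp only: exp_le_cancel_iff of_nat_0_le_iff)
      finally show "measure (\<nu> l) (cyl m w) / measure (\<nu> l') (cyl m w)
          \<le> exp (C * dist l l' powr \<theta>' * real (length w))" unfolding d_def .
    qed
  qed (simp add: divide_self_if)
  moreover have "0 < C" unfolding C_def by simp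
  ultimately show ?thesis by blast
next
  case True
  show ?thesis unfolding True by (intro exI[of _ 1]) simp
qed

end

theorem mainTheorem15:
  fixes m :: nat
    and U :: "(real ^ 'd) set"
    and phi :: "real ^ 'd \<Rightarrow> (nat \<Rightarrow> nat) \<Rightarrow> real"
    and \<alpha> b c \<theta> :: real
    and h :: "real ^ 'd \<Rightarrow> (nat \<Rightarrow> nat) \<Rightarrow> real"
    and \<nu> :: "real ^ 'd \<Rightarrow> (nat \<Rightarrow> nat) measure"
  assumes U_open: "open U" and U_bounded: "bounded U"
    and H1_const: "0 < \<alpha>" "\<alpha> < 1" "0 < b"
    and H1: "\<And>l x y. l \<in> closure U \<Longrightarrow> x \<in> Sigma_space m \<Longrightarrow> y \<in> Sigma_space m \<Longrightarrow> x \<noteq> y \<Longrightarrow>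
              \<bar>phi l x - phi l y\<bar> \<le> b * \<alpha> ^ cpl x y"
    and H2_const: "0 < c" "0 < \<theta>" "\<theta> < 1"
    and H2: "\<And>l l' x. l \<in> closure U \<Longrightarrow> l' \<in> closure U \<Longrightarrow> x \<in> Sigma_space m \<Longrightarrow>
              \<bar>phi l x - phi l' x\<bar> \<le> c * dist l l' powr \<theta>"
    and h_cont: "\<And>l. l \<in> closure U \<Longrightarrow> continuous_on (Sigma_space m) (h l)"
    and h_Lambda: "\<And>l. l \<in> closure U \<Longrightarrow> h l \<in> Lambda_cone m b \<alpha>"
    and h_eig: "\<And>l x. l \<in> closure U \<Longrightarrow> x \<in> Sigma_space m \<Longrightarrow>
              transfer m (phi l) (h l) x = exp (pressure m (phi l)) * h l x"
    and \<nu>_prob: "\<And>l. l \<in> closure U \<Longrightarrow> prob_space (\<nu> l)"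
    and \<nu>_sets: "\<And>l. l \<in> closure U \<Longrightarrow> sets (\<nu> l) = sets (Sigma_M m)"
    and \<nu>_eig: "\<And>l f. l \<in> closure U \<Longrightarrow> continuous_on (Sigma_space m) f \<Longrightarrow>
              (\<integral>x. transfer m (phi l) f x \<partial>\<nu> l) = exp (pressure m (phi l)) * (\<integral>x. f x \<partial>\<nu> l)"
    and h_norm: "\<And>l. l \<in> closure U \<Longrightarrow> (\<integral>x. h l x \<partial>\<nu> l) = 1"
  shows "\<forall>\<theta>'. 0 < \<theta>' \<and> \<theta>' < \<theta> \<longrightarrow>
           (\<exists>C>0. \<forall>l\<in>U. \<forall>l'\<in>U.
              (\<forall>x\<in>Sigma_space m. h l x / h l' x \<le> exp (C * dist l l' powr \<theta>')) \<and>
              (\<forall>w\<in>words m. measure (\<nu> l) (cyl m w) / measure (\<nu> l') (cyl m w)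
                   \<le> exp (C * dist l l' powr \<theta>' * real (length w))))"
proof -
  have in_closure: "l \<in> U \<Longrightarrow> l \<in> closure U" for l using closure_subset by blast
  interpret potential_family m U phi \<alpha> b c \<theta> h \<nu>
    by (rule potential_family.intro)
      (simp_all add: holder_potential_def in_closure H1 H2 U_bounded H1_const less_imp_le[OF H2_const(1)]
        h_Lambda h_eig \<nu>_prob \<nu>_sets \<nu>_eig h_norm)
  show ?thesis using holder_dependence by blast
qed

end
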